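(* In the binary model, let $0<\tau<1/24$ be a constant and let $\boldsymbol\theta^*=\boldsymbol\theta^*_n\in\mathbb{R}^{2n-1}$ satisfy $\|\boldsymbol\theta^*\|_\infty\le\tau\log n$, and let $A\sim\mathbb{P}_{\boldsymbol\theta^*}$. Then as $n\to\infty$, with probability tending to one the MLE $\hat{\boldsymbol\theta}$ exists and satisfies \[ \|\hat{\boldsymbol\theta}-\boldsymbol\theta^*\|_\infty=O_p\Bigl(\frac{(\log n)^{1/2}e^{8\|\boldsymbol\theta^*\|_\infty}}{n^{1/2}}\Bigr)=o_p(1). \] Moreover, whenever the MLE exists it is unique.
   Context: Binary model: Let $n\ge2$. For $\boldsymbol\theta=(\alpha_1,\dots,\alpha_n,\beta_1,\dots,\beta_{n-1})^\top\in\mathbb{R}^{2n-1}$ set $\beta_n=0$, and let $\mathbb{P}_{\boldsymbol\theta}$ be the law of a random $n\times n$ matrix $A=(a_{i,j})$ with $a_{i,i}=0$ and $a_{i,j}$ ($i\ne j$) mutually independent Bernoulli with $\mathbb{P}(a_{i,j}=1)=e^{\alpha_i+\beta_j}/(1+e^{\alpha_i+\beta_j})$. Out-degrees $d_i=\sum_{j\ne i}a_{i,j}$, in-degrees $b_j=\sum_{i\ne j}a_{i,j}$. The MLE $\hat{\boldsymbol\theta}=(\hat\alpha_1,\dots,\hat\alpha_n,\hat\beta_1,\dots,\hat\beta_{n-1})^\top$ (with $\hat\beta_n=0$) is a solution in $\mathbb{R}^{2n-1}$ of the likelihood equations $d_i=\sum_{k\ne i}\frac{e^{\hat\alpha_i+\hat\beta_k}}{1+e^{\hat\alpha_i+\hat\beta_k}}$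 ($i=1,\dots,n$) and $b_j=\sum_{k\ne j}\frac{e^{\hat\alpha_k+\hat\beta_j}}{1+e^{\hat\alpha_k+\hat\beta_j}}$ ($j=1,\dots,n-1$). *)

theory Defs
  imports Complex_Main
begin

text \<open>Binary (directed beta) model, 0-based indexing.
  A parameter vector theta in R^(2n-1) is a function nat => real, only the
  coordinates k < 2n-1 matter: alpha_i = theta i (i < n),
  beta_j = theta (n + j) (j < n - 1), and beta_(n-1) = 0.\<close>

definition logistic :: "real \<Rightarrow> real" where
  "logistic x = exp x / (1 + exp x)"

definition alpha_of :: "nat \<Rightarrow> (nat \<Rightarrow> real) \<Rightarrow> nat \<Rightarrow> real" where
  "alpha_of n \<theta> i = \<theta> i"

definition beta_of :: "nat \<Rightarrow> (nat \<Rightarrow> real) \<Rightarrow> nat \<Rightarrow> real" where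
  "beta_of n \<theta> j = (if j < n - 1 then \<theta> (n + j) else 0)"

definition edge_prob :: "nat \<Rightarrow> (nat \<Rightarrow> real) \<Rightarrow> nat \<Rightarrow> nat \<Rightarrow> real" where
  "edge_prob n \<theta> i j = logistic (alpha_of n \<theta> i + beta_of n \<theta> j)"

definition supnorm :: "nat \<Rightarrow> (nat \<Rightarrow> real) \<Rightarrow> real" where
  "supnorm n \<theta> = Max ((\<lambda>k. \<bar>\<theta> k\<bar>) ` {..<2*n-1})"

definition offdiag :: "nat \<Rightarrow> (nat \<times> nat) set" where
  "offdiag n = {(i, j). i < n \<and> j < n \<and> i \<noteq> j}"

definition adj_mats :: "nat \<Rightarrow> (nat \<Rightarrow> nat \<Rightarrow> bool) set" where
  "adj_mats n = {A. \<forall>i j. A i j \<longrightarrow> (i, j) \<in> offdiag n}"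

definition mat_prob :: "nat \<Rightarrow> (nat \<Rightarrow> real) \<Rightarrow> (nat \<Rightarrow> nat \<Rightarrow> bool) \<Rightarrow> real" where
  "mat_prob n \<theta> A =
     (\<Prod>(i, j)\<in>offdiag n. if A i j then edge_prob n \<theta> i j else 1 - edge_prob n \<theta> i j)"

definition Prob :: "nat \<Rightarrow> (nat \<Rightarrow> real) \<Rightarrow> (nat \<Rightarrow> nat \<Rightarrow> bool) set \<Rightarrow> real" where
  "Prob n \<theta> E = (\<Sum>A\<in>adj_mats n \<inter> E. mat_prob n \<theta> A)"

definition outdeg :: "nat \<Rightarrow> (nat \<Rightarrow> nat \<Rightarrow> bool) \<Rightarrow> nat \<Rightarrow> nat" where
  "outdeg n A i = card {j. j < n \<and> j \<noteq> i \<and> A i j}"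

definition indeg :: "nat \<Rightarrow> (nat \<Rightarrow> nat \<Rightarrow> bool) \<Rightarrow> nat \<Rightarrow> nat" where
  "indeg n A j = card {i. i < n \<and> i \<noteq> j \<and> A i j}"

text \<open>theta_hat solves the likelihood equations for the observed matrix A.\<close>
definition is_mle :: "nat \<Rightarrow> (nat \<Rightarrow> nat \<Rightarrow> bool) \<Rightarrow> (nat \<Rightarrow> real) \<Rightarrow> bool" where
  "is_mle n A \<theta>h \<longleftrightarrow>
     (\<forall>i<n. real (outdeg n A i) = (\<Sum>k\<in>{k. k < n \<and> k \<noteq> i}. edge_prob n \<theta>h i k)) \<and>
     (\<forall>j<n - 1. real (indeg n A j) = (\<Sum>k\<in>{k. k < n \<and> k \<noteq> j}. edge_prob n \<theta>h k j))"

definition mle_exists :: "nat \<Rightarrow> (nat \<Rightarrow> nat \<Rightarrow> bool) \<Rightarrow> bool" where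
  "mle_exists n A \<longleftrightarrow> (\<exists>\<theta>h. is_mle n A \<theta>h)"

definition supdist :: "nat \<Rightarrow> (nat \<Rightarrow> real) \<Rightarrow> (nat \<Rightarrow> real) \<Rightarrow> real" where
  "supdist n \<theta>1 \<theta>2 = supnorm n (\<lambda>k. \<theta>1 k - \<theta>2 k)"

end

theory Submission
  imports Defs "HOL-Probability.Probability" "HOL-Real_Asymp.Real_Asymp"
begin

(* Uniqueness: for two solutions of the likelihood equations, the differences
   g(i,j) of edge probabilities satisfy sum g(i,j) * (difference of the linear
   predictors) = 0, every summand is >= 0 by monotonicity of the logistic
   function, hence all linear predictors agree, which identifies the parameters.

   Existence and consistency: a deterministic statement first.  If all degrees
   deviate by at most t from their expectations, minimise the negative
   log-likelihood over the unit box around the true parameter.  The one-sided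
   stationarity conditions at the minimiser feed an abstract maximum principle
   (comparing the extreme coordinates of the perturbation) which bounds the
   perturbation by O(e^(4M) t / n).  After normalising the last in-parameter to
   0 the minimiser lies in the interior of the box, so it solves the likelihood
   equations.  Hoeffding's inequality with t = sqrt(n log n) and a union bound
   over the 2n degrees show that this happens with probability >= 1 - 4/n, and
   the assumption ||theta|| <= tau log n with tau < 1/24 makes the error o(1). *)

abbreviation others :: "nat \<Rightarrow> nat \<Rightarrow> nat set" where
  "others n i \<equiv> {k. k < n \<and> k \<noteq> i}"

lemma others_eq: "others n i = {..<n} - {i}" by auto

lemma card_others: "i < n \<Longrightarrow> card (others n i) = n - 1"
  by (simp add: others_eq card_Diff_subset)

lemma offdiag_Sigma: "offdiag n = Sigma {..<n} (others n)"
  by (auto simp: offdiag_def)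

lemma finite_offdiag [simp]: "finite (offdiag n)"
  by (simp add: offdiag_Sigma)

lemma sum_offdiag_rows:
  "(\<Sum>p\<in>offdiag n. h p) = (\<Sum>i<n. \<Sum>j\<in>others n i. h (i, j))"
  by (simp add: offdiag_Sigma sum.Sigma)

lemma sum_others_if: "(\<Sum>j\<in>others n i. g j) = (\<Sum>j<n. if j \<noteq> i then g j else 0)"
proof -
  have "others n i = {j \<in> {..<n}. j \<noteq> i}" by auto
  then have "(\<Sum>j\<in>others n i. g j) = (\<Sum>j\<in>{j \<in> {..<n}. j \<noteq> i}. g j)" by simp
  also have "\<dots> = (\<Sum>j<n. if j \<noteq> i then g j else 0)" by (rule sum.inter_filter) simp
  finally show ?thesis .
qed

lemma sum_offdiag_cols:
  "(\<Sum>p\<in>offdiag n. h p) = (\<Sum>j<n. \<Sum>i\<in>others n j. h (i, j))"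
proof -
  have "(\<Sum>p\<in>offdiag n. h p) = (\<Sum>i<n. \<Sum>j<n. if j \<noteq> i then h (i, j) else 0)"
    by (simp add: sum_offdiag_rows sum_others_if)
  also have "\<dots> = (\<Sum>j<n. \<Sum>i<n. if i \<noteq> j then h (i, j) else 0)"
    by (subst sum.swap) (intro sum.cong refl, auto)
  also have "\<dots> = (\<Sum>j<n. \<Sum>i\<in>others n j. h (i, j))"
    by (simp add: sum_others_if)
  finally show ?thesis .
qed

lemma card_as_indicator_sum:
  "real (card {k. k < n \<and> k \<noteq> i \<and> P k}) = (\<Sum>k\<in>others n i. if P k then 1 else 0)"
proof -
  have "{k. k < n \<and> k \<noteq> i \<and> P k} = {k \<in> others n i. P k}" by auto
  then show ?thesis by (simp add: sum.If_cases Int_def conj_commute)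
qed

section \<open>The logistic function\<close>

lemma one_plus_exp_pos [simp]: "0 < 1 + exp (x::real)"
  by (simp add: add_pos_pos)

lemma one_plus_exp_ne_zero [simp]: "1 + exp (x::real) \<noteq> 0"
  using one_plus_exp_pos[of x] by linarith

lemma logistic_pos: "0 < logistic x"
  by (simp add: logistic_def)

lemma logistic_lt1: "logistic x < 1"
  by (simp add: logistic_def)

lemma logistic_strict_mono: "(x::real) < y \<Longrightarrow> logistic x < logistic y"
proof -
  assume "x < y"
  have alt: "logistic z = 1 / (1 + exp (- z))" for z :: real
    by (simp add: logistic_def exp_minus field_simps)
  show ?thesis unfolding alt using \<open>x < y\<close>
    by (intro divide_strict_left_mono) (auto intro!: add_pos_pos mult_pos_pos)
qed

lemma logistic_deriv:
  fixes x :: real shows "(logistic has_real_derivative (exp x / (1 + exp x)^2)) (at x)"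
proof -
  have "((\<lambda>x. exp x / (1 + exp x)) has_real_derivative
      ((exp x * (1 + exp x) - exp x * exp x) / ((1 + exp x) * (1 + exp x)))) (at x)"
    by (auto intro!: derivative_eq_intros)
  moreover have "(exp x * (1 + exp x) - exp x * exp x) / ((1 + exp x) * (1 + exp x))
      = exp x / (1 + exp x)^2"
    by (simp add: power2_eq_square algebra_simps)
  ultimately show ?thesis unfolding logistic_def[abs_def] by simp
qed

lemma logistic_deriv_le: "exp (x::real) / (1 + exp x)^2 \<le> 1/4"
proof -
  have "4 * exp x \<le> (1 + exp x)^2"
    using sum_squares_ge_zero[of "1 - exp x" 0] by (simp add: power2_eq_square algebra_simps)
  then show ?thesis by (simp add: field_simps)
qed

lemma logistic_deriv_ge:
  fixes x K :: real
  assumes "\<bar>x\<bar> \<le> K"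
  shows "exp (- K) / 4 \<le> exp x / (1 + exp x)^2"
proof (cases "x \<ge> 0")
  case True
  have "(1 + exp x)^2 \<le> (2 * exp x)^2"
    using True by (intro power_mono) auto
  hence h: "(1 + exp x)^2 \<le> 4 * exp x * exp x" by (simp add: power2_eq_square)
  have "exp (-K) \<le> exp (-x)" using assms True by simp
  hence "exp (-K) * (1 + exp x)^2 \<le> exp (-x) * (4 * exp x * exp x)"
    using h by (intro mult_mono) auto
  also have "\<dots> = 4 * exp x" by (simp add: exp_minus field_simps)
  finally show ?thesis by (simp add: field_simps)
next
  case False
  have "(1 + exp x)^2 \<le> 2^2"
    using False by (intro power_mono) auto
  moreover have "exp (-K) \<le> exp x" using assms False by simp
  ultimately have "exp (-K) * (1 + exp x)^2 \<le> exp x * 4"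
    by (intro mult_mono) auto
  then show ?thesis by (simp add: field_simps)
qed

lemma logistic_diff_le:
  fixes s t :: real
  assumes "s \<le> t"
  shows "logistic t - logistic s \<le> (t - s) / 4"
proof -
  have "(\<lambda>x. logistic x - x/4) t \<le> (\<lambda>x. logistic x - x/4) s"
  proof (rule DERIV_nonpos_imp_nonincreasing[OF assms])
    fix x
    have "((\<lambda>x. logistic x - x/4) has_real_derivative (exp x / (1 + exp x)^2 - 1/4)) (at x)"
      by (auto intro!: derivative_eq_intros logistic_deriv)
    then show "\<exists>y. ((\<lambda>x. logistic x - x/4) has_real_derivative y) (at x) \<and> y \<le> 0"
      using logistic_deriv_le[of x] by force
  qed
  thus ?thesis by simp
qed

lemma logistic_diff_ge:
  fixes s t K :: real
  assumes "s \<le> t" "\<bar>s\<bar> \<le> K" "\<bar>t\<bar> \<le> K"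
  shows "exp (-K) / 4 * (t - s) \<le> logistic t - logistic s"
proof -
  have "(\<lambda>x. logistic x - exp (-K)/4 * x) s \<le> (\<lambda>x. logistic x - exp (-K)/4 * x) t"
  proof (rule DERIV_nonneg_imp_nondecreasing[OF assms(1)])
    fix x assume "s \<le> x" "x \<le> t"
    hence "\<bar>x\<bar> \<le> K" using assms by auto
    have "((\<lambda>x. logistic x - exp (-K)/4 * x) has_real_derivative
        (exp x / (1 + exp x)^2 - exp (-K)/4)) (at x)"
      by (auto intro!: derivative_eq_intros logistic_deriv)
    then show "\<exists>y. ((\<lambda>x. logistic x - exp (-K)/4 * x) has_real_derivative y) (at x) \<and> 0 \<le> y"
      using logistic_deriv_ge[OF \<open>\<bar>x\<bar> \<le> K\<close>] by force
  qed
  thus ?thesis by (simp add: algebra_simps diff_divide_distrib)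
qed

lemma logistic_increment_sandwich:
  fixes s s' K :: real
  assumes "\<bar>s\<bar> \<le> K" "\<bar>s'\<bar> \<le> K"
  shows "0 \<le> s' - s \<Longrightarrow> exp (-K) / 4 * (s' - s) \<le> logistic s' - logistic s
                        \<and> logistic s' - logistic s \<le> (s' - s) / 4"
    and "s' - s \<le> 0 \<Longrightarrow> logistic s' - logistic s \<le> exp (-K) / 4 * (s' - s)
                        \<and> (s' - s) / 4 \<le> logistic s' - logistic s"
proof -
  assume "0 \<le> s' - s"
  then show "exp (-K) / 4 * (s' - s) \<le> logistic s' - logistic s
      \<and> logistic s' - logistic s \<le> (s' - s) / 4"
    using logistic_diff_ge[of s s' K] logistic_diff_le[of s s'] assms by simp
next
  assume "s' - s \<le> 0"
  then have "exp (-K) / 4 * (s - s') \<le> logistic s - logistic s'"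
    and "logistic s - logistic s' \<le> (s - s') / 4"
    using logistic_diff_ge[of s' s K] logistic_diff_le[of s' s] assms by simp_all
  then show "logistic s' - logistic s \<le> exp (-K) / 4 * (s' - s)
      \<and> (s' - s) / 4 \<le> logistic s' - logistic s"
    by (simp_all add: algebra_simps diff_divide_distrib)
qed

lemma logistic_increment_nonneg: "0 \<le> (logistic x - logistic y) * ((x::real) - y)"
proof (cases x y rule: linorder_cases)
  case less
  then show ?thesis using logistic_strict_mono[OF less] by (intro mult_nonpos_nonpos) auto
next
  case greater
  then show ?thesis using logistic_strict_mono[OF greater] by simp
qed simp

lemma logistic_increment_zero: "(logistic x - logistic y) * ((x::real) - y) = 0 \<Longrightarrow> x = y"
  by (cases x y rule: linorder_cases) (auto dest: logistic_strict_mono)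

section \<open>Uniqueness of the MLE\<close>

text \<open>For \<open>n = 2\<close> the likelihood equations force a degree in \<open>{0, 1}\<close> to equal a
  probability strictly between 0 and 1, so there is no MLE.\<close>
lemma no_mle_2: "\<not> is_mle 2 A \<theta>"
proof
  assume h: "is_mle 2 A \<theta>"
  have s: "others 2 0 = {1}" by auto
  have e: "{k. k < (2::nat) \<and> k \<noteq> 0 \<and> A 0 k} = (if A 0 1 then {1} else {})"
    by (auto simp: less_2_cases_iff)
  from h have "real (outdeg 2 A 0) = (\<Sum>k\<in>others 2 0. edge_prob 2 \<theta> 0 k)"
    unfolding is_mle_def by simp
  also have "\<dots> = edge_prob 2 \<theta> 0 1" by (simp only: s) simp
  finally have "real (outdeg 2 A 0) = edge_prob 2 \<theta> 0 1" .
  moreover have "real (outdeg 2 A 0) = 0 \<or> real (outdeg 2 A 0) = 1"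
    unfolding outdeg_def e by auto
  ultimately show False
    using logistic_pos logistic_lt1 by (metis edge_prob_def less_irrefl)
qed

text \<open>Writing \<open>g\<close> for the difference of
  edge probabilities, the likelihood equations say that all row sums and the first
  \<open>n - 1\<close> column sums of \<open>g\<close> vanish; pairing with the differences of the parameters
  gives a vanishing sum of non-negative terms.\<close>
lemma mle_predictors_agree:
  assumes h1: "is_mle n A \<theta>1" and h2: "is_mle n A \<theta>2"
    and ij: "i < n" "j < n" "i \<noteq> j"
  shows "\<theta>1 i + beta_of n \<theta>1 j = \<theta>2 i + beta_of n \<theta>2 j"
proof -
  define u where "u i = \<theta>1 i - \<theta>2 i" for i
  define v where "v j = beta_of n \<theta>1 j - beta_of n \<theta>2 j" for j
  define x1 where "x1 i j = \<theta>1 i + beta_of n \<theta>1 j" for i j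
  define x2 where "x2 i j = \<theta>2 i + beta_of n \<theta>2 j" for i j
  define g where "g i j = logistic (x1 i j) - logistic (x2 i j)" for i j
  have ep: "edge_prob n \<theta> i j = logistic (\<theta> i + beta_of n \<theta> j)" for \<theta> i j
    by (simp add: edge_prob_def alpha_of_def)
  have x12: "x1 i j - x2 i j = u i + v j" for i j
    by (simp add: x1_def x2_def u_def v_def)
  have row: "u i * (\<Sum>j\<in>others n i. g i j) = 0" if "i < n" for i
    using h1 h2 that unfolding is_mle_def g_def x1_def x2_def ep
    by (simp add: sum_subtractf)
  have col: "v j * (\<Sum>i\<in>others n j. g i j) = 0" if "j < n" for j
  proof (cases "j < n - 1")
    case True then show ?thesis
      using h1 h2 unfolding is_mle_def g_def x1_def x2_def ep by (simp add: sum_subtractf)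
  next
    case False then show ?thesis by (simp add: v_def beta_of_def)
  qed
  have "(\<Sum>p\<in>offdiag n. g (fst p) (snd p) * (u (fst p) + v (snd p)))
      = (\<Sum>p\<in>offdiag n. g (fst p) (snd p) * u (fst p))
        + (\<Sum>p\<in>offdiag n. g (fst p) (snd p) * v (snd p))"
    by (simp add: distrib_left sum.distrib)
  also have "(\<Sum>p\<in>offdiag n. g (fst p) (snd p) * u (fst p))
      = (\<Sum>i<n. u i * (\<Sum>j\<in>others n i. g i j))"
    by (simp add: sum_offdiag_rows sum_distrib_left mult.commute)
  also have "(\<Sum>p\<in>offdiag n. g (fst p) (snd p) * v (snd p))
      = (\<Sum>j<n. v j * (\<Sum>i\<in>others n j. g i j))"
    by (simp add: sum_offdiag_cols sum_distrib_left mult.commute)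
  also have "(\<Sum>i<n. u i * (\<Sum>j\<in>others n i. g i j))
        + (\<Sum>j<n. v j * (\<Sum>i\<in>others n j. g i j)) = 0"
    using row col by (simp add: sum.neutral)
  finally have sum0: "(\<Sum>p\<in>offdiag n. g (fst p) (snd p) * (u (fst p) + v (snd p))) = 0" .
  have nonneg: "\<forall>p\<in>offdiag n. 0 \<le> g (fst p) (snd p) * (u (fst p) + v (snd p))"
    using logistic_increment_nonneg by (simp add: g_def x12[symmetric])
  have "(i, j) \<in> offdiag n" using ij by (simp add: offdiag_def)
  then have "g i j * (u i + v j) = 0"
    using sum_nonneg_eq_0_iff[OF finite_offdiag nonneg[rule_format]] sum0 by fastforce
  then have "x1 i j = x2 i j" unfolding g_def x12[symmetric] by (rule logistic_increment_zero)
  then show ?thesis by (simp add: x1_def x2_def)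
qed

text \<open>With \<open>\<beta>_(n-1) = 0\<close> the linear predictors determine all parameters once
  \<open>n \<ge> 3\<close>: first the \<open>\<alpha>_i\<close> for \<open>i < n - 1\<close>, then every \<open>\<beta>_j\<close>, then \<open>\<alpha>_(n-1)\<close>.\<close>
lemma mle_unique:
  assumes n: "n \<ge> 2" and h1: "is_mle n A \<theta>1" and h2: "is_mle n A \<theta>2" and k: "k < 2*n-1"
  shows "\<theta>1 k = \<theta>2 k"
proof (cases "n = 2")
  case True then show ?thesis using h1 no_mle_2 by simp
next
  case False
  with n have n3: "n \<ge> 3" by simp
  have agree: "\<theta>1 i + beta_of n \<theta>1 j = \<theta>2 i + beta_of n \<theta>2 j"
    if "i < n" "j < n" "i \<noteq> j" for i j
    using mle_predictors_agree[OF h1 h2 that] .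
  have alpha: "\<theta>1 i = \<theta>2 i" if "i < n" "i \<noteq> n - 1" for i
    using agree[of i "n - 1"] that n3 by (simp add: beta_of_def)
  have beta: "beta_of n \<theta>1 j = beta_of n \<theta>2 j" if "j < n" for j
  proof -
    obtain i where "i < n" "i \<noteq> n - 1" "i \<noteq> j"
      using n3 by (cases "j = 0") (auto intro: that[of 0] that[of 1])
    then show ?thesis using agree[of i j] alpha[of i] that by simp
  qed
  have alpha_last: "\<theta>1 (n - 1) = \<theta>2 (n - 1)"
    using agree[of "n - 1" 0] beta[of 0] n3 by simp
  show ?thesis
  proof (cases "k < n")
    case True
    then show ?thesis using alpha alpha_last by (cases "k = n - 1") auto
  next
    case False
    then have "k - n < n - 1" "k = n + (k - n)" using k by auto
    then show ?thesis using beta[of "k - n"] by (simp add: beta_of_def)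
  qed
qed

section \<open>An abstract maximum principle\<close>

text \<open>Think of \<open>da\<close>, \<open>db\<close> as a perturbation
  of the out- and in-parameters inside the box of radius \<open>R\<close>, of \<open>D i k\<close> as the
  resulting change of the edge probability, sandwiched between \<open>w\<close> and \<open>1/4\<close> times
  \<open>da i + db k\<close>, and of \<open>e\<close>, \<open>f\<close> as the degree deviations (bounded by \<open>E\<close>).
  The row and column sums of \<open>D\<close> match \<open>e\<close> and \<open>f\<close> one-sidedly, the side
  depending on which face of the box the coordinate is away from: these are the
  stationarity conditions of a minimiser over the box.\<close>
definition mp_hyps :: "nat \<Rightarrow> (nat \<Rightarrow> real) \<Rightarrow> (nat \<Rightarrow> real) \<Rightarrow> (nat \<Rightarrow> nat \<Rightarrow> real)
   \<Rightarrow> (nat \<Rightarrow> real) \<Rightarrow> (nat \<Rightarrow> real) \<Rightarrow> real \<Rightarrow> real \<Rightarrow> real \<Rightarrow> bool" where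
 "mp_hyps n da db D e f E w R \<longleftrightarrow>
  0 < w \<and> w \<le> 1/4 \<and> 0 \<le> E \<and> 0 < R \<and>
  (\<forall>i<n. \<forall>k<n. i \<noteq> k \<longrightarrow>
     (0 \<le> da i + db k \<longrightarrow> w * (da i + db k) \<le> D i k \<and> D i k \<le> (da i + db k) / 4) \<and>
     (da i + db k \<le> 0 \<longrightarrow> D i k \<le> w * (da i + db k) \<and> (da i + db k) / 4 \<le> D i k)) \<and>
  (\<forall>i<n. \<bar>da i\<bar> \<le> R \<and> \<bar>db i\<bar> \<le> R) \<and>
  (\<forall>i<n. (da i < R \<longrightarrow> e i \<le> (\<Sum>k\<in>others n i. D i k)) \<and>
         (- R < da i \<longrightarrow> (\<Sum>k\<in>others n i. D i k) \<le> e i)) \<and>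
  (\<forall>j<n. (db j < R \<longrightarrow> f j \<le> (\<Sum>k\<in>others n j. D k j)) \<and>
         (- R < db j \<longrightarrow> (\<Sum>k\<in>others n j. D k j) \<le> f j)) \<and>
  (\<forall>i<n. \<bar>e i\<bar> \<le> E \<and> \<bar>f i\<bar> \<le> E)"

text \<open>The hypotheses are invariant under negation and under transposition (exchanging
  the roles of out- and in-parameters with a sign change); this halves the work.\<close>
lemma mp_hyps_neg:
  assumes "mp_hyps n da db D e f E w R"
  shows "mp_hyps n (\<lambda>i. - da i) (\<lambda>i. - db i) (\<lambda>i k. - D i k) (\<lambda>i. - e i) (\<lambda>i. - f i) E w R"
  using assms unfolding mp_hyps_def by (simp add: sum_negf) (auto simp: algebra_simps)

lemma mp_hyps_transpose:
  assumes "mp_hyps n da db D e f E w R"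
  shows "mp_hyps n (\<lambda>i. - db i) (\<lambda>i. - da i) (\<lambda>i k. - D k i) (\<lambda>i. - f i) (\<lambda>i. - e i) E w R"
  using assms unfolding mp_hyps_def by (simp add: sum_negf) (auto simp: algebra_simps)

lemma mp_hyps_basic:
  assumes "mp_hyps n da db D e f E w R"
  shows "0 < w" "w \<le> 1/4" "0 \<le> E" "0 < R"
  using assms by (auto simp: mp_hyps_def)

definition mp_eps :: "nat \<Rightarrow> real \<Rightarrow> real \<Rightarrow> real" where
  "mp_eps n E w = E / ((real n - 1) * w)"

definition mp_S :: "nat \<Rightarrow> real \<Rightarrow> real \<Rightarrow> real" where
  "mp_S n E w = (E + (real n - 1) * mp_eps n E w / 2) / w"

lemma mp_eps_nonneg: "mp_hyps n da db D e f E w R \<Longrightarrow> n \<ge> 2 \<Longrightarrow> 0 \<le> mp_eps n E w"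
  using mp_hyps_basic[of n da db D e f E w R] unfolding mp_eps_def
  by (auto intro!: divide_nonneg_pos mult_pos_pos)

lemma mp_S_nonneg: "mp_hyps n da db D e f E w R \<Longrightarrow> n \<ge> 2 \<Longrightarrow> 0 \<le> mp_S n E w"
  using mp_hyps_basic[of n da db D e f E w R] mp_eps_nonneg[of n da db D e f E w R]
  unfolding mp_S_def by (auto intro!: divide_nonneg_pos add_nonneg_nonneg)

text \<open>At a row \<open>i\<close> with maximal \<open>da\<close> and a column \<open>j\<close> with minimal \<open>db\<close>, the sum
  \<open>da i + db j\<close> is at most \<open>mp_eps\<close>: otherwise every term of row \<open>i\<close> would be at
  least \<open>w (da i + db j)\<close> and the row sum would exceed \<open>E\<close>.\<close>
lemma mp_extreme_sum_le:
  assumes H: "mp_hyps n da db D e f E w R" and n: "n \<ge> 2" and i: "i < n" and j: "j < n"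
    and imax: "\<forall>i'<n. da i' \<le> da i" and jmin: "\<forall>j'<n. db j \<le> db j'"
  shows "da i + db j \<le> mp_eps n E w"
proof (cases "da i + db j \<le> 0")
  case True then show ?thesis using mp_eps_nonneg[OF H n] by linarith
next
  case False
  define m where "m = da i + db j"
  have m: "0 < m" using False by (simp add: m_def)
  from H have w: "0 < w" and dbR: "\<bar>db j\<bar> \<le> R" using j by (auto simp: mp_hyps_def)
  have "- R < da i" using m dbR by (simp add: m_def abs_le_iff)
  then have up: "(\<Sum>k\<in>others n i. D i k) \<le> e i" using H i by (auto simp: mp_hyps_def)
  have eE: "e i \<le> E" using H i by (auto simp: mp_hyps_def)
  have lb: "w * m \<le> D i k" if k: "k \<in> others n i" for k
  proof -
    have "db j \<le> db k" using jmin k by simp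
    then have d: "m \<le> da i + db k" by (simp add: m_def)
    then have "w * (da i + db k) \<le> D i k" using H i k m by (auto simp: mp_hyps_def)
    moreover have "w * m \<le> w * (da i + db k)" using d w by (simp add: mult_left_mono)
    ultimately show ?thesis by linarith
  qed
  have "of_nat (card (others n i)) * (w * m) \<le> (\<Sum>k\<in>others n i. D i k)"
    by (rule sum_bounded_below) (use lb in auto)
  then have "(real n - 1) * (w * m) \<le> E" using up eE card_others[OF i] n
    by (simp add: of_nat_diff)
  then have "m * ((real n - 1) * w) \<le> E" by (simp add: algebra_simps)
  moreover have "0 < (real n - 1) * w" using n w by simp
  ultimately show ?thesis unfolding m_def mp_eps_def by (simp add: pos_le_divide_eq)
qed

lemma mp_row_excess_le:
  assumes H: "mp_hyps n da db D e f E w R" and n: "n \<ge> 2" and i: "i < n" and j: "j < n"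
    and jmin: "\<forall>j'<n. db j \<le> db j'"
    and mlow: "- mp_eps n E w \<le> da i + db j" and dai: "- R < da i"
  shows "(\<Sum>k\<in>others n i. db k - db j) \<le> mp_S n E w"
proof -
  define \<epsilon> where "\<epsilon> = mp_eps n E w"
  define m where "m = da i + db j"
  have \<epsilon>0: "0 \<le> \<epsilon>" using mp_eps_nonneg[OF H n] by (simp add: \<epsilon>_def)
  from H have w: "0 < w" "w \<le> 1/4" by (auto simp: mp_hyps_def)
  have up: "(\<Sum>k\<in>others n i. D i k) \<le> e i" using H i dai by (auto simp: mp_hyps_def)
  have eE: "e i \<le> E" using H i by (auto simp: mp_hyps_def)
  have mlow': "- \<epsilon> \<le> m" using mlow by (simp add: \<epsilon>_def m_def)
  have wm: "- (\<epsilon> / 4) \<le> w * m"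
  proof -
    have "w * (- \<epsilon>) \<le> w * m" using mlow' w by (intro mult_left_mono) auto
    moreover have "w * \<epsilon> \<le> (1/4) * \<epsilon>" using w \<epsilon>0 by (intro mult_right_mono) auto
    ultimately show ?thesis by simp
  qed
  have lb: "w * (db k - db j) - \<epsilon> / 2 \<le> D i k" if k: "k \<in> others n i" for k
  proof -
    have "db j \<le> db k" using jmin k by simp
    show ?thesis
    proof (cases "0 \<le> da i + db k")
      case True
      then have "w * (da i + db k) \<le> D i k" using H i k by (auto simp: mp_hyps_def)
      moreover have "w * (da i + db k) = w * (db k - db j) + w * m"
        by (simp add: m_def algebra_simps)
      ultimately show ?thesis using wm \<epsilon>0 by linarith
    next
      case False
      then have "(da i + db k) / 4 \<le> D i k" using H i k by (auto simp: mp_hyps_def)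
      moreover have "db k - db j \<le> \<epsilon>" using False mlow' by (simp add: m_def)
      then have "w * (db k - db j) \<le> (1/4) * \<epsilon>"
        using w \<epsilon>0 \<open>db j \<le> db k\<close> by (intro mult_mono) auto
      moreover have "- \<epsilon> \<le> da i + db k" using mlow' \<open>db j \<le> db k\<close> by (simp add: m_def)
      then have "- \<epsilon> / 4 \<le> (da i + db k) / 4" by (simp add: divide_right_mono)
      ultimately show ?thesis by linarith
    qed
  qed
  have "(\<Sum>k\<in>others n i. w * (db k - db j) - \<epsilon> / 2) \<le> (\<Sum>k\<in>others n i. D i k)"
    by (rule sum_mono) (use lb in auto)
  also have "(\<Sum>k\<in>others n i. w * (db k - db j) - \<epsilon> / 2)
      = w * (\<Sum>k\<in>others n i. db k - db j) - (real n - 1) * \<epsilon> / 2"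
    using card_others[OF i] n
    by (simp only: sum_subtractf sum_distrib_left[symmetric] sum_constant) (simp add: of_nat_diff)
  finally have "w * (\<Sum>k\<in>others n i. db k - db j) \<le> E + (real n - 1) * \<epsilon> / 2"
    using up eE by linarith
  then show ?thesis using w unfolding mp_S_def \<epsilon>_def by (simp add: pos_le_divide_eq mult.commute)
qed

lemma ex_argmax: "0 < (n::nat) \<Longrightarrow> \<exists>i<n. \<forall>i'<n. (f i' :: real) \<le> f i"
proof -
  assume n: "0 < n"
  have "Max (f ` {..<n}) \<in> f ` {..<n}" using n by (intro Max_in finite_imageI) auto
  then obtain i where i: "i < n" "f i = Max (f ` {..<n})" by auto
  then show ?thesis by (auto intro: Max_ge)
qed

lemma ex_argmin: "0 < (n::nat) \<Longrightarrow> \<exists>i<n. \<forall>i'<n. (f i :: real) \<le> f i'"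
  using ex_argmax[of n "\<lambda>i. - f i"] by force

text \<open>Either a row is on a face of the box, and one extreme sum
  alone bounds the spread, or the row excesses of the rows \<open>i\<close>, \<open>i'\<close> maximising and
  minimising \<open>da\<close> together cover \<open>n - 2\<close> copies of \<open>db j - db j'\<close>.\<close>
lemma mp_spread_le:
  assumes H: "mp_hyps n da db D e f E w R" and n: "n \<ge> 3"
    and i: "i < n" "\<forall>i''<n. da i'' \<le> da i" and i': "i' < n" "\<forall>i''<n. da i' \<le> da i''"
    and j: "j < n" "\<forall>j''<n. db j'' \<le> db j" and j': "j' < n" "\<forall>j''<n. db j' \<le> db j''"
    and m_lo: "- mp_eps n E w \<le> da i + db j'" and m'_up: "da i' + db j \<le> mp_eps n E w"
  shows "db j - db j' \<le> mp_eps n E w + 2 * mp_S n E w / (real n - 2)"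
proof -
  define \<epsilon> where "\<epsilon> = mp_eps n E w"
  define S where "S = mp_S n E w"
  have n2: "n \<ge> 2" using n by simp
  have \<epsilon>0: "0 \<le> \<epsilon>" using mp_eps_nonneg[OF H n2] by (simp add: \<epsilon>_def)
  have S0: "0 \<le> S" using mp_S_nonneg[OF H n2] by (simp add: S_def)
  have R: "\<forall>i<n. \<bar>da i\<bar> \<le> R \<and> \<bar>db i\<bar> \<le> R" using H by (simp add: mp_hyps_def)
  show ?thesis
  proof (cases "da i \<le> - R \<or> R \<le> da i'")
    case True
    then have "db j - db j' \<le> \<epsilon>"
      using m_lo m'_up R i(1) i'(1) j(1) j'(1) unfolding \<epsilon>_def by force
    moreover have "0 \<le> 2 * S / (real n - 2)" using S0 n by simp
    ultimately show ?thesis unfolding \<epsilon>_def S_def by linarith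
  next
    case False
    have s1: "(\<Sum>k\<in>others n i. db k - db j') \<le> S"
      using mp_row_excess_le[OF H n2 i(1) j'(1) j'(2)] m_lo False by (simp add: S_def)
    have s2: "(\<Sum>k\<in>others n i'. db j - db k) \<le> S"
      using mp_row_excess_le[OF mp_hyps_neg[OF H] n2 i'(1) j(1)] j(2) m'_up False
      by (simp add: S_def)
    define K where "K = {..<n} - {i, i'}"
    have cK: "real n - 2 \<le> real (card K)"
    proof -
      have "card {i, i'} \<le> 2" by (simp add: card_insert_le_m1)
      moreover have "card K = n - card {i, i'}" unfolding K_def using i i'
        by (subst card_Diff_subset) auto
      ultimately show ?thesis by linarith
    qed
    have "(\<Sum>k\<in>K. db j - db j') = (\<Sum>k\<in>K. db k - db j') + (\<Sum>k\<in>K. db j - db k)"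
      by (simp add: sum.distrib[symmetric])
    also have "(\<Sum>k\<in>K. db k - db j') \<le> (\<Sum>k\<in>others n i. db k - db j')"
      by (rule sum_mono2) (use j' in \<open>auto simp: K_def\<close>)
    also have "(\<Sum>k\<in>K. db j - db k) \<le> (\<Sum>k\<in>others n i'. db j - db k)"
      by (rule sum_mono2) (use j in \<open>auto simp: K_def\<close>)
    finally have "real (card K) * (db j - db j') \<le> 2 * S" using s1 s2 by simp
    moreover have "0 \<le> db j - db j'" using j j' by auto
    ultimately have "(real n - 2) * (db j - db j') \<le> 2 * S"
      using cK by (meson mult_right_mono order_trans)
    moreover have "0 < real n - 2" using n by simp
    ultimately have "db j - db j' \<le> 2 * S / (real n - 2)"
      by (simp add: pos_le_divide_eq mult.commute)
    then show ?thesis using \<epsilon>0 unfolding \<epsilon>_def S_def by linarith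
  qed
qed

text \<open>The four extreme sums are bounded by \<open>mp_extreme_sum_le\<close> applied to
  the hypotheses and their negated and transposed versions.\<close>
lemma max_principle:
  assumes H: "mp_hyps n da db D e f E w R" and n: "n \<ge> 3"
  defines "spr \<equiv> mp_eps n E w + 2 * mp_S n E w / (real n - 2)"
  shows "\<forall>a<n. \<forall>k<n. \<bar>da a + db k\<bar> \<le> mp_eps n E w + spr \<and> \<bar>db a - db k\<bar> \<le> spr"
proof -
  define \<epsilon> where "\<epsilon> = mp_eps n E w"
  have n2: "n \<ge> 2" and n0: "0 < n" using n by simp_all
  have Hn: "mp_hyps n (\<lambda>i. - da i) (\<lambda>i. - db i) (\<lambda>i k. - D i k) (\<lambda>i. - e i) (\<lambda>i. - f i) E w R"
    by (rule mp_hyps_neg[OF H])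
  have Ht: "mp_hyps n (\<lambda>i. - db i) (\<lambda>i. - da i) (\<lambda>i k. - D k i) (\<lambda>i. - f i) (\<lambda>i. - e i) E w R"
    by (rule mp_hyps_transpose[OF H])
  have Htn: "mp_hyps n (\<lambda>i. - (- db i)) (\<lambda>i. - (- da i)) (\<lambda>i k. - (- D k i))
      (\<lambda>i. - (- f i)) (\<lambda>i. - (- e i)) E w R"
    by (rule mp_hyps_transpose[OF Hn])
  obtain i where i: "i < n" "\<forall>i'<n. da i' \<le> da i" using ex_argmax[OF n0] by blast
  obtain i' where i': "i' < n" "\<forall>i''<n. da i' \<le> da i''" using ex_argmin[OF n0] by blast
  obtain j where j: "j < n" "\<forall>j'<n. db j' \<le> db j" using ex_argmax[OF n0] by blast
  obtain j' where j': "j' < n" "\<forall>j''<n. db j' \<le> db j''" using ex_argmin[OF n0] by blast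
  have m_up: "da i + db j' \<le> \<epsilon>"
    using mp_extreme_sum_le[OF H n2 i(1) j'(1) i(2) j'(2)] by (simp add: \<epsilon>_def)
  have m_lo: "- \<epsilon> \<le> da i + db j'"
    using mp_extreme_sum_le[OF Ht n2 j'(1) i(1)] j'(2) i(2) by (simp add: \<epsilon>_def)
  have m'_lo: "- \<epsilon> \<le> da i' + db j"
    using mp_extreme_sum_le[OF Hn n2 i'(1) j(1)] j(2) i'(2) by (simp add: \<epsilon>_def)
  have m'_up: "da i' + db j \<le> \<epsilon>"
    using mp_extreme_sum_le[OF Htn n2 j(1) i'(1)] j(2) i'(2) by (simp add: \<epsilon>_def)
  have sp: "db j - db j' \<le> spr"
    using mp_spread_le[OF H n i i' j j'] m_lo m'_up unfolding spr_def \<epsilon>_def by simp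
  show ?thesis
  proof (intro allI impI conjI)
    fix a k assume a: "a < n" and k: "k < n"
    have "da a + db k \<le> da i + db j" using i j a k by (simp add: add_mono)
    moreover have "da i' + db j' \<le> da a + db k" using i' j' a k by (simp add: add_mono)
    ultimately show "\<bar>da a + db k\<bar> \<le> mp_eps n E w + spr"
      using m_up m'_lo sp unfolding \<epsilon>_def by linarith
    have "db j' \<le> db a" "db a \<le> db j" "db j' \<le> db k" "db k \<le> db j" using j j' a k by auto
    then show "\<bar>db a - db k\<bar> \<le> spr" using sp by linarith
  qed
qed

section \<open>The negative log-likelihood and its box minimisers\<close>

text \<open>Negative log-likelihood in the unnormalised coordinates: \<open>x i\<close> is \<open>\<alpha>_i\<close> and
  \<open>x (n + j)\<close> is \<open>\<beta>_j\<close> for all \<open>i, j < n\<close>, including \<open>\<beta>_(n-1)\<close>.\<close>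
definition neg_loglik :: "nat \<Rightarrow> (nat \<Rightarrow> nat \<Rightarrow> bool) \<Rightarrow> (nat \<Rightarrow> real) \<Rightarrow> real" where
  "neg_loglik n A x = (\<Sum>p\<in>offdiag n. ln (1 + exp (x (fst p) + x (n + snd p)))
      - (if A (fst p) (snd p) then x (fst p) + x (n + snd p) else 0))"

definition loglik_grad :: "nat \<Rightarrow> (nat \<Rightarrow> nat \<Rightarrow> bool) \<Rightarrow> (nat \<Rightarrow> real) \<Rightarrow> nat \<Rightarrow> real" where
  "loglik_grad n A x q =
    (if q < n then (\<Sum>k\<in>others n q. logistic (x q + x (n + k))) - real (outdeg n A q)
     else (\<Sum>k\<in>others n (q - n). logistic (x k + x q)) - real (indeg n A (q - n)))"

lemma loglik_term_deriv:
  "((\<lambda>t. ln (1 + exp (s + c * t)) - (if b then s + c * t else 0)) has_real_derivative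
     (c * (logistic (s + c * t) - (if b then 1 else 0)))) (at t)"
proof -
  have "((\<lambda>t. ln (1 + exp (s + c * t)) - (if b then s + c * t else 0)) has_real_derivative
     (exp (s + c * t) * c / (1 + exp (s + c * t)) - (if b then c else 0))) (at t)"
    by (cases b) (auto intro!: derivative_eq_intros)
  moreover have "exp (s + c * t) * c / (1 + exp (s + c * t)) - (if b then c else 0)
      = c * (logistic (s + c * t) - (if b then 1 else 0))"
    by (simp add: logistic_def algebra_simps)
  ultimately show ?thesis by simp
qed

lemma neg_loglik_update:
  "neg_loglik n A (x(q := x q + t)) = (\<Sum>p\<in>offdiag n.
      ln (1 + exp ((x (fst p) + x (n + snd p))
        + ((if fst p = q then 1 else 0) + (if n + snd p = q then 1 else 0)) * t))
      - (if A (fst p) (snd p) then (x (fst p) + x (n + snd p))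
        + ((if fst p = q then 1 else 0) + (if n + snd p = q then 1 else 0)) * t else 0))"
  unfolding neg_loglik_def by (intro sum.cong refl) (auto simp: algebra_simps)

lemma neg_loglik_partial_deriv:
  assumes q: "q < 2 * n"
  shows "((\<lambda>t. neg_loglik n A (x(q := x q + t))) has_real_derivative loglik_grad n A x q) (at 0)"
proof -
  define c where "c p = ((if fst p = q then 1 else 0) + (if n + snd p = q then 1 else 0) :: real)" for p
  define s where "s p = x (fst p) + x (n + snd p)" for p
  define summand where "summand p = c p * (logistic (s p + c p * 0) - (if A (fst p) (snd p) then 1 else 0))"
    for p
  have eq: "(\<lambda>t. neg_loglik n A (x(q := x q + t))) = (\<lambda>t. \<Sum>p\<in>offdiag n.
      ln (1 + exp (s p + c p * t)) - (if A (fst p) (snd p) then s p + c p * t else 0))"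
    unfolding neg_loglik_update c_def s_def by simp
  have d: "((\<lambda>t. neg_loglik n A (x(q := x q + t))) has_real_derivative
      (\<Sum>p\<in>offdiag n. summand p)) (at 0)"
    unfolding eq summand_def by (intro DERIV_sum loglik_term_deriv)
  have "(\<Sum>p\<in>offdiag n. summand p) = loglik_grad n A x q"
  proof (cases "q < n")
    case True
    have "(\<Sum>p\<in>offdiag n. summand p) = (\<Sum>i<n. \<Sum>j\<in>others n i.
        (if i = q then logistic (x i + x (n + j)) - (if A i j then 1 else 0) else 0))"
      unfolding sum_offdiag_rows using True
      by (intro sum.cong refl) (auto simp: summand_def c_def s_def)
    also have "\<dots> = (\<Sum>i<n. if i = q then
        (\<Sum>j\<in>others n i. logistic (x i + x (n + j)) - (if A i j then 1 else 0)) else 0)"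
      by (intro sum.cong refl) auto
    also have "\<dots> = (\<Sum>j\<in>others n q. logistic (x q + x (n + j)) - (if A q j then 1 else 0))"
      using True by (simp add: sum.delta)
    also have "\<dots> = loglik_grad n A x q"
      using True by (simp add: loglik_grad_def sum_subtractf outdeg_def card_as_indicator_sum)
    finally show ?thesis .
  next
    case False
    define j0 where "j0 = q - n"
    have j0: "j0 < n" "q = n + j0" using False q by (auto simp: j0_def)
    have "(\<Sum>p\<in>offdiag n. summand p) = (\<Sum>j<n. \<Sum>i\<in>others n j.
        (if j = j0 then logistic (x i + x (n + j)) - (if A i j then 1 else 0) else 0))"
      unfolding sum_offdiag_cols using j0
      by (intro sum.cong refl) (auto simp: summand_def c_def s_def)
    also have "\<dots> = (\<Sum>j<n. if j = j0 then
        (\<Sum>i\<in>others n j. logistic (x i + x (n + j)) - (if A i j then 1 else 0)) else 0)"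
      by (intro sum.cong refl) auto
    also have "\<dots> = (\<Sum>i\<in>others n j0. logistic (x i + x (n + j0)) - (if A i j0 then 1 else 0))"
      using j0 by (simp add: sum.delta)
    also have "\<dots> = loglik_grad n A x q"
      using j0 False by (simp add: loglik_grad_def sum_subtractf indeg_def card_as_indicator_sum)
    finally show ?thesis .
  qed
  with d show ?thesis by simp
qed

lemma box_minimiser_one_sided:
  assumes q: "q < 2 * n"
    and box: "\<forall>k. lo k \<le> x k \<and> x k \<le> hi k"
    and min: "\<forall>y. (\<forall>k. lo k \<le> y k \<and> y k \<le> hi k) \<longrightarrow> neg_loglik n A x \<le> neg_loglik n A y"
  shows "x q < hi q \<Longrightarrow> 0 \<le> loglik_grad n A x q" and "lo q < x q \<Longrightarrow> loglik_grad n A x q \<le> 0"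
proof -
  define g where "g t = neg_loglik n A (x(q := x q + t))" for t
  have g0: "g 0 = neg_loglik n A x" by (simp add: g_def)
  have der: "(g has_real_derivative loglik_grad n A x q) (at 0)"
    unfolding g_def by (rule neg_loglik_partial_deriv[OF q])
  have in_box: "neg_loglik n A x \<le> g t" if "lo q \<le> x q + t" "x q + t \<le> hi q" for t
    unfolding g_def using that box by (intro min[rule_format]) auto
  show "0 \<le> loglik_grad n A x q" if hq: "x q < hi q"
  proof (rule ccontr)
    assume "\<not> 0 \<le> loglik_grad n A x q"
    then obtain d where d: "d > 0" "\<forall>h>0. h < d \<longrightarrow> g 0 > g (0 + h)"
      using DERIV_neg_dec_right[OF der] by force
    define h where "h = min (d / 2) ((hi q - x q) / 2)"
    have "h \<le> (hi q - x q) / 2" unfolding h_def by (rule min.cobounded2)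
    then have h: "h > 0" "h < d" "x q + h \<le> hi q" using d hq by (auto simp: h_def)
    have "g 0 > g h" using d h by auto
    moreover have "neg_loglik n A x \<le> g h" using h box by (intro in_box) (auto intro: order_trans)
    ultimately show False using g0 by simp
  qed
  show "loglik_grad n A x q \<le> 0" if hq: "lo q < x q"
  proof (rule ccontr)
    assume "\<not> loglik_grad n A x q \<le> 0"
    then obtain d where d: "d > 0" "\<forall>h>0. h < d \<longrightarrow> g (0 - h) < g 0"
      using DERIV_pos_inc_left[OF der] by force
    define h where "h = min (d / 2) ((x q - lo q) / 2)"
    have "h \<le> (x q - lo q) / 2" unfolding h_def by (rule min.cobounded2)
    then have h: "h > 0" "h < d" "lo q \<le> x q - h" using d hq by (auto simp: h_def)
    have "g (0 - h) < g 0" using d h by auto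
    moreover have "neg_loglik n A x \<le> g (0 - h)"
      using h box[rule_format, of q] by (intro in_box) auto
    ultimately show False using g0 by simp
  qed
qed

lemma neg_loglik_continuous: "continuous_on UNIV (neg_loglik n A)"
proof -
  have "continuous_on UNIV (\<lambda>x::nat\<Rightarrow>real. if b then x i + x j else 0)" for b i j
    by (cases b) (auto intro!: continuous_intros)
  then show ?thesis unfolding neg_loglik_def[abs_def] by (intro continuous_intros) auto
qed

text \<open>A minimiser over a (compact, by Tychonoff) box exists.\<close>
lemma neg_loglik_box_minimiser:
  assumes "\<forall>k. lo k \<le> (hi k :: real)"
  shows "\<exists>x. (\<forall>k. lo k \<le> x k \<and> x k \<le> hi k) \<and>
     (\<forall>y. (\<forall>k. lo k \<le> y k \<and> y k \<le> hi k) \<longrightarrow> neg_loglik n A x \<le> neg_loglik n A y)"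
proof -
  define B where "B = PiE UNIV (\<lambda>k. {lo k .. hi k})"
  have B_iff: "y \<in> B \<longleftrightarrow> (\<forall>k. lo k \<le> y k \<and> y k \<le> hi k)" for y by (auto simp: B_def)
  have "compactin (product_topology (\<lambda>_. euclidean) UNIV) B"
    by (simp add: B_def compactin_PiE)
  then have "compact B" by (simp add: euclidean_product_topology)
  moreover have "B \<noteq> {}" using assms B_iff[of lo] by auto
  moreover have "continuous_on B (neg_loglik n A)"
    using neg_loglik_continuous continuous_on_subset by blast
  ultimately obtain x where "x \<in> B" "\<forall>y\<in>B. neg_loglik n A x \<le> neg_loglik n A y"
    using continuous_attains_inf by blast
  then show ?thesis using B_iff by blast
qed

lemma interior_box_minimiser_is_mle:
  assumes box: "\<forall>k. lo k \<le> x k \<and> x k \<le> hi k"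
    and min: "\<forall>y. (\<forall>k. lo k \<le> y k \<and> y k \<le> hi k) \<longrightarrow> neg_loglik n A x \<le> neg_loglik n A y"
    and interior: "\<forall>q<2*n. lo q < x q \<and> x q < hi q"
    and last: "x (n + (n - 1)) = 0"
  shows "is_mle n A x"
proof -
  have grad0: "loglik_grad n A x q = 0" if q: "q < 2 * n" for q
    using box_minimiser_one_sided[OF q box min] interior q by force
  have beta: "beta_of n x k = x (n + k)" if "k < n" for k
  proof (cases "k < n - 1")
    case False
    with that have "k = n - 1" by simp
    with last show ?thesis by (simp add: beta_of_def)
  qed (simp add: beta_of_def)
  have ep: "edge_prob n x i k = logistic (x i + x (n + k))" if "k < n" for i k
    using beta[OF that] by (simp add: edge_prob_def alpha_of_def)
  show ?thesis
    unfolding is_mle_def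
  proof (intro conjI allI impI)
    fix i assume i: "i < n"
    then have "real (outdeg n A i) = (\<Sum>k\<in>others n i. logistic (x i + x (n + k)))"
      using grad0[of i] by (simp add: loglik_grad_def)
    also have "\<dots> = (\<Sum>k\<in>others n i. edge_prob n x i k)"
      by (intro sum.cong refl) (auto simp: ep)
    finally show "real (outdeg n A i) = (\<Sum>k\<in>others n i. edge_prob n x i k)" .
  next
    fix j assume j: "j < n - 1"
    then have "real (indeg n A j) = (\<Sum>k\<in>others n j. logistic (x k + x (n + j)))"
      using grad0[of "n + j"] by (simp add: loglik_grad_def)
    also have "\<dots> = (\<Sum>k\<in>others n j. edge_prob n x k j)"
      using j by (intro sum.cong refl) (auto simp: ep)
    finally show "real (indeg n A j) = (\<Sum>k\<in>others n j. edge_prob n x k j)" .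
  qed
qed

section \<open>Deterministic existence and error bound\<close>

text \<open>Lower bound on the slope of the logistic function on \<open>[-(2M+2), 2M+2]\<close>, the range
  of linear predictors within the unit box around a parameter of sup norm \<open>M\<close>.\<close>
definition slope_lb :: "real \<Rightarrow> real" where "slope_lb M = exp (- (2 * M + 2)) / 4"

definition err_bound :: "nat \<Rightarrow> real \<Rightarrow> real \<Rightarrow> real" where
  "err_bound n t M = mp_eps n t (slope_lb M)
     + (mp_eps n t (slope_lb M) + 2 * mp_S n t (slope_lb M) / (real n - 2))"

lemma one_sided_stationary_mp_hyps:
  fixes xs x :: "nat \<Rightarrow> real"
  assumes xs_bound: "\<forall>k. \<bar>xs k\<bar> \<le> M" and t: "0 \<le> t"
    and near: "\<forall>k<2*n. \<bar>x k - xs k\<bar> \<le> 1"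
    and up: "\<forall>q<2*n. x q < xs q + 1 \<longrightarrow> 0 \<le> loglik_grad n A x q"
    and down: "\<forall>q<2*n. xs q - 1 < x q \<longrightarrow> loglik_grad n A x q \<le> 0"
    and dev_out: "\<forall>i<n. \<bar>real (outdeg n A i) - (\<Sum>k\<in>others n i. logistic (xs i + xs (n + k)))\<bar> \<le> t"
    and dev_in: "\<forall>j<n. \<bar>real (indeg n A j) - (\<Sum>k\<in>others n j. logistic (xs k + xs (n + j)))\<bar> \<le> t"
  shows "mp_hyps n (\<lambda>i. x i - xs i) (\<lambda>j. x (n + j) - xs (n + j))
           (\<lambda>i k. logistic (x i + x (n + k)) - logistic (xs i + xs (n + k)))
           (\<lambda>i. real (outdeg n A i) - (\<Sum>k\<in>others n i. logistic (xs i + xs (n + k))))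
           (\<lambda>j. real (indeg n A j) - (\<Sum>k\<in>others n j. logistic (xs k + xs (n + j))))
           t (slope_lb M) 1"
    (is "mp_hyps n ?da ?db ?D ?e ?f t _ 1")
proof -
  have M0: "0 \<le> M" using xs_bound[rule_format, of 0] by simp
  have sandwich: "(0 \<le> ?da i + ?db k \<longrightarrow> slope_lb M * (?da i + ?db k) \<le> ?D i k
                   \<and> ?D i k \<le> (?da i + ?db k) / 4) \<and>
                  (?da i + ?db k \<le> 0 \<longrightarrow> ?D i k \<le> slope_lb M * (?da i + ?db k)
                   \<and> (?da i + ?db k) / 4 \<le> ?D i k)"
    if "i < n" "k < n" for i k
  proof -
    have sb: "\<bar>xs i + xs (n + k)\<bar> \<le> 2 * M + 2"
      using xs_bound[rule_format, of i] xs_bound[rule_format, of "n + k"] by simp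
    have s'b: "\<bar>x i + x (n + k)\<bar> \<le> 2 * M + 2"
      using xs_bound[rule_format, of i] xs_bound[rule_format, of "n + k"]
        near[rule_format, of i] near[rule_format, of "n + k"] that by simp
    have eq: "?da i + ?db k = (x i + x (n + k)) - (xs i + xs (n + k))" by simp
    show ?thesis
      unfolding eq slope_lb_def using logistic_increment_sandwich[OF sb s'b] by blast
  qed
  have row: "(\<Sum>k\<in>others n i. ?D i k) - ?e i = loglik_grad n A x i" if "i < n" for i
    using that by (simp add: loglik_grad_def sum_subtractf)
  have col: "(\<Sum>k\<in>others n j. ?D k j) - ?f j = loglik_grad n A x (n + j)" if "j < n" for j
    using that by (simp add: loglik_grad_def sum_subtractf)
  show ?thesis
    unfolding mp_hyps_def
  proof (intro conjI allI impI)
    show "0 < slope_lb M" "slope_lb M \<le> 1/4" using M0 by (simp_all add: slope_lb_def)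
    show "0 \<le> t" "(0::real) < 1" using t by simp_all
  next
    fix i k assume "i < n" "k < n"
    with sandwich show "0 \<le> ?da i + ?db k \<Longrightarrow> slope_lb M * (?da i + ?db k) \<le> ?D i k"
      and "0 \<le> ?da i + ?db k \<Longrightarrow> ?D i k \<le> (?da i + ?db k) / 4"
      and "?da i + ?db k \<le> 0 \<Longrightarrow> ?D i k \<le> slope_lb M * (?da i + ?db k)"
      and "?da i + ?db k \<le> 0 \<Longrightarrow> (?da i + ?db k) / 4 \<le> ?D i k"
      by blast+
  next
    fix i assume i: "i < n"
    show "\<bar>?da i\<bar> \<le> 1" "\<bar>?db i\<bar> \<le> 1" using near i by simp_all
    show "\<bar>?e i\<bar> \<le> t" "\<bar>?f i\<bar> \<le> t" using dev_out dev_in i by simp_all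
    show "?e i \<le> (\<Sum>k\<in>others n i. ?D i k)" if "?da i < 1"
      using up[rule_format, of i] row[OF i] that i by simp
    show "(\<Sum>k\<in>others n i. ?D i k) \<le> ?e i" if "- 1 < ?da i"
      using down[rule_format, of i] row[OF i] that i by simp
    show "?f i \<le> (\<Sum>k\<in>others n i. ?D k i)" if "?db i < 1"
      using up[rule_format, of "n + i"] col[OF i] that i by simp
    show "(\<Sum>k\<in>others n i. ?D k i) \<le> ?f i" if "- 1 < ?db i"
      using down[rule_format, of "n + i"] col[OF i] that i by simp
  qed
qed

text \<open>The likelihood only sees the linear predictors \<open>\<alpha>_i + \<beta>_j\<close>, so shifting all
  \<open>\<alpha>\<close> up and all \<open>\<beta>\<close> down by \<open>x (2n-1)\<close> normalises \<open>\<beta>_(n-1)\<close> to 0 without changing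
  it.\<close>
lemma normalised_shift:
  fixes x xs :: "nat \<Rightarrow> real"
  assumes small: "\<forall>i<n. \<forall>k<n. \<bar>(x i - xs i) + (x (n + k) - xs (n + k))\<bar> \<le> r
                   \<and> \<bar>(x (n + i) - xs (n + i)) - (x (n + k) - xs (n + k))\<bar> \<le> r"
    and xs_last: "xs (n + (n - 1)) = 0" and n: "n \<ge> 1"
    and x': "\<And>k. x' k = (if k < n then x k + x (n + (n - 1))
                           else if k < 2 * n then x k - x (n + (n - 1)) else 0)"
  shows "\<forall>k<2*n. \<bar>x' k - xs k\<bar> \<le> r" and "\<forall>k\<ge>2*n. x' k = 0" and "x' (n + (n - 1)) = 0"
    and "neg_loglik n A x' = neg_loglik n A x"
proof -
  show "\<forall>k<2*n. \<bar>x' k - xs k\<bar> \<le> r"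
  proof (intro allI impI)
    fix k assume k: "k < 2 * n"
    show "\<bar>x' k - xs k\<bar> \<le> r"
    proof (cases "k < n")
      case True
      then show ?thesis
        using small[rule_format, of k "n - 1"] n xs_last by (simp add: x' algebra_simps)
    next
      case False
      then have "k - n < n" "k = n + (k - n)" using k by auto
      then show ?thesis
        using small[rule_format, of "k - n" "n - 1"] n xs_last False k
        by (simp add: x' algebra_simps)
    qed
  qed
  show "\<forall>k\<ge>2*n. x' k = 0" by (simp add: x')
  show "x' (n + (n - 1)) = 0" using n by (simp add: x') arith
  show "neg_loglik n A x' = neg_loglik n A x"
    unfolding neg_loglik_def by (intro sum.cong refl) (auto simp: offdiag_def x')
qed

lemma supnorm_ge: "k < 2 * n - 1 \<Longrightarrow> \<bar>\<theta> k\<bar> \<le> supnorm n \<theta>"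
  unfolding supnorm_def by (intro Max_ge) auto

lemma supnorm_nonneg: "n \<ge> 1 \<Longrightarrow> 0 \<le> supnorm n \<theta>"
  using supnorm_ge[of 0 n \<theta>] by simp

lemma supdist_le:
  assumes "n \<ge> 1" "\<forall>k<2*n-1. \<bar>\<theta>1 k - \<theta>2 k\<bar> \<le> c"
  shows "supdist n \<theta>1 \<theta>2 \<le> c"
proof -
  have "0 \<in> {..<2*n-1}" using assms(1) by simp
  then have "{..<2*n-1} \<noteq> {}" by blast
  then show ?thesis unfolding supdist_def supnorm_def using assms by (subst Max_le_iff) auto
qed

text \<open>It is
  obtained by minimising the likelihood over the unit box around \<open>xs\<close>, applying the
  maximum principle, and normalising; the normalised minimiser is interior.\<close>
theorem mle_exists_near_reference:
  fixes A :: "nat \<Rightarrow> nat \<Rightarrow> bool" and xs :: "nat \<Rightarrow> real"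
  assumes n3: "n \<ge> 3" and t0: "0 \<le> t"
    and xs_bound: "\<forall>k. \<bar>xs k\<bar> \<le> M" and xs_last: "xs (n + (n - 1)) = 0"
    and dev_out: "\<forall>i<n. \<bar>real (outdeg n A i) - (\<Sum>k\<in>others n i. logistic (xs i + xs (n + k)))\<bar> \<le> t"
    and dev_in: "\<forall>j<n. \<bar>real (indeg n A j) - (\<Sum>k\<in>others n j. logistic (xs k + xs (n + j)))\<bar> \<le> t"
    and small: "err_bound n t M < 1"
  shows "\<exists>x. is_mle n A x \<and> (\<forall>k<2*n. \<bar>x k - xs k\<bar> \<le> err_bound n t M)"
proof -
  define Err where "Err = err_bound n t M"
  define lo where "lo k = (if k < 2*n then xs k - 1 else 0)" for k
  define hi where "hi k = (if k < 2*n then xs k + 1 else 0)" for k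
  obtain xh where box: "\<forall>k. lo k \<le> xh k \<and> xh k \<le> hi k"
    and min: "\<forall>y. (\<forall>k. lo k \<le> y k \<and> y k \<le> hi k) \<longrightarrow> neg_loglik n A xh \<le> neg_loglik n A y"
    using neg_loglik_box_minimiser[of lo hi n A] unfolding lo_def hi_def by fastforce
  have "mp_hyps n (\<lambda>i. xh i - xs i) (\<lambda>j. xh (n + j) - xs (n + j))
           (\<lambda>i k. logistic (xh i + xh (n + k)) - logistic (xs i + xs (n + k)))
           (\<lambda>i. real (outdeg n A i) - (\<Sum>k\<in>others n i. logistic (xs i + xs (n + k))))
           (\<lambda>j. real (indeg n A j) - (\<Sum>k\<in>others n j. logistic (xs k + xs (n + j))))
           t (slope_lb M) 1"
  proof (rule one_sided_stationary_mp_hyps[OF xs_bound t0 _ _ _ dev_out dev_in])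
    show "\<forall>k<2*n. \<bar>xh k - xs k\<bar> \<le> 1"
    proof (intro allI impI)
      fix k assume "k < 2 * n"
      then show "\<bar>xh k - xs k\<bar> \<le> 1"
        using box[rule_format, of k] by (simp add: lo_def hi_def abs_le_iff)
    qed
    show "\<forall>q<2*n. xh q < xs q + 1 \<longrightarrow> 0 \<le> loglik_grad n A xh q"
      using box_minimiser_one_sided(1)[OF _ box min] by (simp add: hi_def)
    show "\<forall>q<2*n. xs q - 1 < xh q \<longrightarrow> loglik_grad n A xh q \<le> 0"
      using box_minimiser_one_sided(2)[OF _ box min] by (simp add: lo_def)
  qed
  from max_principle[OF this n3] mp_eps_nonneg[OF this]
  have "\<forall>i<n. \<forall>k<n. \<bar>(xh i - xs i) + (xh (n + k) - xs (n + k))\<bar> \<le> Err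
           \<and> \<bar>(xh (n + i) - xs (n + i)) - (xh (n + k) - xs (n + k))\<bar> \<le> Err"
    using n3 unfolding Err_def err_bound_def by force
  moreover have "n \<ge> 1" using n3 by simp
  moreover define x where "x k = (if k < n then xh k + xh (n + (n - 1))
      else if k < 2 * n then xh k - xh (n + (n - 1)) else 0)" for k
  ultimately have close: "\<forall>k<2*n. \<bar>x k - xs k\<bar> \<le> Err"
    and outside: "\<forall>k\<ge>2*n. x k = 0" and last: "x (n + (n - 1)) = 0"
    and same: "neg_loglik n A x = neg_loglik n A xh"
    using normalised_shift[where x = xh and xs = xs and r = Err and x' = x] xs_last by blast+
  have interior: "\<forall>q<2*n. lo q < x q \<and> x q < hi q"
    using close small unfolding Err_def by (auto simp: lo_def hi_def abs_le_iff)
  have "\<forall>k. lo k \<le> x k \<and> x k \<le> hi k"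
  proof
    fix k show "lo k \<le> x k \<and> x k \<le> hi k"
    proof (cases "k < 2 * n")
      case True then show ?thesis using interior[rule_format, of k] by simp
    next
      case False then show ?thesis using outside by (simp add: lo_def hi_def)
    qed
  qed
  then have "is_mle n A x"
    using interior_box_minimiser_is_mle[OF _ _ interior last] min same by simp
  with close show ?thesis unfolding Err_def by blast
qed

theorem mle_exists_near_truth:
  fixes A :: "nat \<Rightarrow> nat \<Rightarrow> bool" and \<theta> :: "nat \<Rightarrow> real"
  assumes n3: "n \<ge> 3" and t0: "0 \<le> t"
    and dout: "\<forall>i<n. \<bar>real (outdeg n A i) - (\<Sum>k\<in>others n i. edge_prob n \<theta> i k)\<bar> \<le> t"
    and din: "\<forall>j<n. \<bar>real (indeg n A j) - (\<Sum>k\<in>others n j. edge_prob n \<theta> k j)\<bar> \<le> t"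
    and small: "err_bound n t (supnorm n \<theta>) < 1"
  shows "\<exists>\<theta>h. is_mle n A \<theta>h \<and> supdist n \<theta>h \<theta> \<le> err_bound n t (supnorm n \<theta>)"
proof -
  define xs where "xs k = (if k < 2*n-1 then \<theta> k else 0)" for k
  have xs_bound: "\<forall>k. \<bar>xs k\<bar> \<le> supnorm n \<theta>"
    using supnorm_ge[of _ n \<theta>] supnorm_nonneg[of n \<theta>] n3 by (auto simp: xs_def)
  have xs_last: "xs (n + (n - 1)) = 0" using n3 by (simp add: xs_def)
  have ep: "edge_prob n \<theta> i k = logistic (xs i + xs (n + k))" if "i < n" "k < n" for i k
    using that by (auto simp: edge_prob_def alpha_of_def beta_of_def xs_def)
  have sums: "(\<Sum>k\<in>others n i. edge_prob n \<theta> i k) = (\<Sum>k\<in>others n i. logistic (xs i + xs (n + k)))"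
    "(\<Sum>k\<in>others n i. edge_prob n \<theta> k i) = (\<Sum>k\<in>others n i. logistic (xs k + xs (n + i)))"
    if "i < n" for i
    using that by (auto intro!: sum.cong simp: ep)
  have "\<forall>i<n. \<bar>real (outdeg n A i) - (\<Sum>k\<in>others n i. logistic (xs i + xs (n + k)))\<bar> \<le> t"
    using dout sums(1) by simp
  moreover have "\<forall>j<n. \<bar>real (indeg n A j) - (\<Sum>k\<in>others n j. logistic (xs k + xs (n + j)))\<bar> \<le> t"
    using din sums(2) by simp
  ultimately obtain x where mle: "is_mle n A x"
    and close: "\<forall>k<2*n. \<bar>x k - xs k\<bar> \<le> err_bound n t (supnorm n \<theta>)"
    using mle_exists_near_reference[OF n3 t0 xs_bound xs_last _ _ small] by blast
  have "supdist n x \<theta> \<le> err_bound n t (supnorm n \<theta>)"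
  proof (rule supdist_le)
    show "\<forall>k<2*n-1. \<bar>x k - \<theta> k\<bar> \<le> err_bound n t (supnorm n \<theta>)"
    proof (intro allI impI)
      fix k assume "k < 2 * n - 1"
      then show "\<bar>x k - \<theta> k\<bar> \<le> err_bound n t (supnorm n \<theta>)"
        using close[rule_format, of k] by (simp add: xs_def)
    qed
  qed (use n3 in simp)
  with mle show ?thesis by blast
qed

definition edge_pmf :: "nat \<Rightarrow> (nat \<Rightarrow> real) \<Rightarrow> (nat \<times> nat \<Rightarrow> bool) pmf" where
  "edge_pmf n \<theta> = Pi_pmf (offdiag n) False (\<lambda>p. bernoulli_pmf (edge_prob n \<theta> (fst p) (snd p)))"

definition as_matrix :: "(nat \<times> nat \<Rightarrow> bool) \<Rightarrow> nat \<Rightarrow> nat \<Rightarrow> bool" where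
  "as_matrix f = (\<lambda>i j. f (i, j))"

lemma edge_prob_01: "0 \<le> edge_prob n \<theta> i j" "edge_prob n \<theta> i j \<le> 1"
  using logistic_pos logistic_lt1 by (auto simp: edge_prob_def less_imp_le)

lemma Prob_as_pmf: "Prob n \<theta> E = measure_pmf.prob (edge_pmf n \<theta>) {f. as_matrix f \<in> E}"
proof -
  define S where "S = {f. (\<forall>x. x \<notin> offdiag n \<longrightarrow> f x = False) \<and> as_matrix f \<in> E}"
  have finS: "finite S"
  proof (rule finite_subset)
    show "S \<subseteq> PiE_dflt (offdiag n) False (\<lambda>_. UNIV)" by (auto simp: S_def PiE_dflt_def)
    show "finite (PiE_dflt (offdiag n) False (\<lambda>_. UNIV :: bool set))"
      by (intro finite_PiE_dflt) auto
  qed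
  have "set_pmf (edge_pmf n \<theta>) \<subseteq> {f. \<forall>x. x \<notin> offdiag n \<longrightarrow> f x = False}"
    unfolding edge_pmf_def by (rule set_Pi_pmf_subset) simp
  then have "{f. as_matrix f \<in> E} \<inter> set_pmf (edge_pmf n \<theta>) = S \<inter> set_pmf (edge_pmf n \<theta>)"
    by (auto simp: S_def)
  then have "measure_pmf.prob (edge_pmf n \<theta>) {f. as_matrix f \<in> E}
      = measure_pmf.prob (edge_pmf n \<theta>) S"
    by (metis measure_Int_set_pmf)
  also have "\<dots> = (\<Sum>f\<in>S. pmf (edge_pmf n \<theta>) f)" by (rule measure_measure_pmf_finite[OF finS])
  also have "\<dots> = (\<Sum>f\<in>S. mat_prob n \<theta> (as_matrix f))"
  proof (rule sum.cong[OF refl])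
    fix f assume f: "f \<in> S"
    have "pmf (edge_pmf n \<theta>) f
        = (\<Prod>x\<in>offdiag n. pmf (bernoulli_pmf (edge_prob n \<theta> (fst x) (snd x))) (f x))"
      using f unfolding edge_pmf_def by (subst pmf_Pi) (auto simp: S_def)
    also have "\<dots> = mat_prob n \<theta> (as_matrix f)"
      unfolding mat_prob_def as_matrix_def by (intro prod.cong refl) (auto simp: edge_prob_01)
    finally show "pmf (edge_pmf n \<theta>) f = mat_prob n \<theta> (as_matrix f)" .
  qed
  also have "\<dots> = (\<Sum>A\<in>adj_mats n \<inter> E. mat_prob n \<theta> A)"
  proof (rule sum.reindex_bij_betw)
    show "bij_betw as_matrix S (adj_mats n \<inter> E)"
    proof (rule bij_betwI[where g = "\<lambda>A p. A (fst p) (snd p)"])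
      show "as_matrix \<in> S \<rightarrow> adj_mats n \<inter> E"
        unfolding S_def adj_mats_def as_matrix_def Pi_iff by blast
      show "(\<lambda>A p. A (fst p) (snd p)) \<in> adj_mats n \<inter> E \<rightarrow> S"
        by (auto simp: S_def adj_mats_def as_matrix_def)
      show "(\<lambda>p. as_matrix f (fst p) (snd p)) = f" for f by (auto simp: as_matrix_def)
      show "as_matrix (\<lambda>p. A (fst p) (snd p)) = A" for A by (auto simp: as_matrix_def)
    qed
  qed
  finally show ?thesis by (simp add: Prob_def)
qed

lemma Prob_mono: "E \<subseteq> F \<Longrightarrow> Prob n \<theta> E \<le> Prob n \<theta> F"
  unfolding Prob_as_pmf by (intro measure_pmf.finite_measure_mono) auto

lemma Prob_le1: "Prob n \<theta> E \<le> 1"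
  unfolding Prob_as_pmf by simp

lemma expectation_edge:
  assumes "p \<in> offdiag n"
  shows "measure_pmf.expectation (edge_pmf n \<theta>) (\<lambda>f. if f p then 1 else 0 :: real)
    = edge_prob n \<theta> (fst p) (snd p)"
proof -
  have "measure_pmf.expectation (edge_pmf n \<theta>) (\<lambda>f. if f p then 1 else 0 :: real)
      = measure_pmf.expectation (map_pmf (\<lambda>f. f p) (edge_pmf n \<theta>)) (\<lambda>b. if b then 1 else 0 :: real)"
    by simp
  also have "map_pmf (\<lambda>f. f p) (edge_pmf n \<theta>) = bernoulli_pmf (edge_prob n \<theta> (fst p) (snd p))"
    unfolding edge_pmf_def using assms by (subst Pi_pmf_component) auto
  finally show ?thesis using edge_prob_01 by simp
qed

section \<open>Concentration of the degrees\<close>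

lemma hoeffding_edge_count:
  assumes I: "I \<subseteq> offdiag n" "I \<noteq> {}" and t: "0 \<le> t"
  shows "measure_pmf.prob (edge_pmf n \<theta>)
      {f. t \<le> \<bar>(\<Sum>p\<in>I. if f p then 1 else 0) - (\<Sum>p\<in>I. edge_prob n \<theta> (fst p) (snd p))\<bar>}
     \<le> 2 * exp (- 2 * t\<^sup>2 / real (card I))"
proof -
  let ?Q = "edge_pmf n \<theta>"
  have finI: "finite I" using I finite_offdiag finite_subset by blast
  define X where "X p f = (if f p then 1 else 0 :: real)" for p :: "nat \<times> nat" and f
  interpret H: Hoeffding_ineq "measure_pmf ?Q" I X "\<lambda>_. 0" "\<lambda>_. 1"
    "\<Sum>i\<in>I. measure_pmf.expectation ?Q (X i)"
  proof unfold_locales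
    show "finite I" by (rule finI)
    have "prob_space.indep_vars (measure_pmf ?Q) (\<lambda>_. count_space UNIV) (\<lambda>x f. f x) (offdiag n)"
      unfolding edge_pmf_def by (rule indep_vars_Pi_pmf) simp
    then have "prob_space.indep_vars (measure_pmf ?Q) (\<lambda>_. count_space UNIV) (\<lambda>x f. f x) I"
      using I(1) by (rule prob_space.indep_vars_subset[OF measure_pmf.prob_space_axioms])
    then have "prob_space.indep_vars (measure_pmf ?Q) (\<lambda>_. borel)
        (\<lambda>p f. (\<lambda>b. if b then 1 else 0 :: real) (f p)) I"
      by (rule prob_space.indep_vars_compose2[OF measure_pmf.prob_space_axioms]) simp
    then show "prob_space.indep_vars (measure_pmf ?Q) (\<lambda>_. borel) X I"
      by (simp add: X_def[abs_def])
    show "AE x in measure_pmf ?Q. X i x \<in> {0..1}" for i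
      by (auto simp: X_def)
  qed
  have mu: "(\<Sum>i\<in>I. measure_pmf.expectation ?Q (X i)) = (\<Sum>p\<in>I. edge_prob n \<theta> (fst p) (snd p))"
    using I(1) by (intro sum.cong refl) (auto simp: X_def[abs_def] expectation_edge)
  have pos: "(\<Sum>i\<in>I. (1 - 0)\<^sup>2 :: real) > 0" using finI I(2) by (simp add: card_gt_0_iff)
  have "measure_pmf.prob ?Q {x \<in> space (measure_pmf ?Q).
        t \<le> \<bar>(\<Sum>i\<in>I. X i x) - (\<Sum>i\<in>I. measure_pmf.expectation ?Q (X i))\<bar>}
       \<le> 2 * exp (- 2 * t\<^sup>2 / (\<Sum>i\<in>I. (1 - 0)\<^sup>2))"
    by (rule H.Hoeffding_ineq_abs_ge[OF t pos])
  then show ?thesis unfolding mu by (simp add: X_def)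
qed

text \<open>Each out- and in-degree is a sum of \<open>n - 1\<close> independent indicators.\<close>
lemma outdeg_deviation:
  assumes n: "n \<ge> 2" and i: "i < n" and t: "0 \<le> t"
  shows "measure_pmf.prob (edge_pmf n \<theta>)
      {f. t \<le> \<bar>real (outdeg n (as_matrix f) i) - (\<Sum>k\<in>others n i. edge_prob n \<theta> i k)\<bar>}
     \<le> 2 * exp (- 2 * t\<^sup>2 / (real n - 1))"
proof -
  define I where "I = Pair i ` others n i"
  have I: "I \<subseteq> offdiag n" using i by (auto simp: I_def offdiag_def)
  have cI: "card I = n - 1" unfolding I_def using card_others[OF i]
    by (subst card_image) (auto simp: inj_on_def)
  have sum_I: "(\<Sum>p\<in>I. g p) = (\<Sum>k\<in>others n i. g (i, k))" for g :: "nat \<times> nat \<Rightarrow> real"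
    unfolding I_def by (subst sum.reindex) (auto simp: inj_on_def)
  have "{f. t \<le> \<bar>real (outdeg n (as_matrix f) i) - (\<Sum>k\<in>others n i. edge_prob n \<theta> i k)\<bar>}
     = {f. t \<le> \<bar>(\<Sum>p\<in>I. if f p then 1 else 0) - (\<Sum>p\<in>I. edge_prob n \<theta> (fst p) (snd p))\<bar>}"
    unfolding sum_I by (simp add: outdeg_def card_as_indicator_sum as_matrix_def)
  also have "measure_pmf.prob (edge_pmf n \<theta>) \<dots> \<le> 2 * exp (- 2 * t\<^sup>2 / real (card I))"
    by (rule hoeffding_edge_count[OF I _ t]) (use cI n in auto)
  finally show ?thesis using cI n by (simp add: of_nat_diff)
qed

lemma indeg_deviation:
  assumes n: "n \<ge> 2" and j: "j < n" and t: "0 \<le> t"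
  shows "measure_pmf.prob (edge_pmf n \<theta>)
      {f. t \<le> \<bar>real (indeg n (as_matrix f) j) - (\<Sum>k\<in>others n j. edge_prob n \<theta> k j)\<bar>}
     \<le> 2 * exp (- 2 * t\<^sup>2 / (real n - 1))"
proof -
  define I where "I = (\<lambda>k. (k, j)) ` others n j"
  have I: "I \<subseteq> offdiag n" using j by (auto simp: I_def offdiag_def)
  have cI: "card I = n - 1" unfolding I_def using card_others[OF j]
    by (subst card_image) (auto simp: inj_on_def)
  have sum_I: "(\<Sum>p\<in>I. g p) = (\<Sum>k\<in>others n j. g (k, j))" for g :: "nat \<times> nat \<Rightarrow> real"
    unfolding I_def by (subst sum.reindex) (auto simp: inj_on_def)
  have "{f. t \<le> \<bar>real (indeg n (as_matrix f) j) - (\<Sum>k\<in>others n j. edge_prob n \<theta> k j)\<bar>}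
     = {f. t \<le> \<bar>(\<Sum>p\<in>I. if f p then 1 else 0) - (\<Sum>p\<in>I. edge_prob n \<theta> (fst p) (snd p))\<bar>}"
    unfolding sum_I by (simp add: indeg_def card_as_indicator_sum as_matrix_def)
  also have "measure_pmf.prob (edge_pmf n \<theta>) \<dots> \<le> 2 * exp (- 2 * t\<^sup>2 / real (card I))"
    by (rule hoeffding_edge_count[OF I _ t]) (use cI n in auto)
  finally show ?thesis using cI n by (simp add: of_nat_diff)
qed

definition degrees_within :: "nat \<Rightarrow> (nat \<Rightarrow> real) \<Rightarrow> real \<Rightarrow> (nat \<Rightarrow> nat \<Rightarrow> bool) \<Rightarrow> bool" where
  "degrees_within n \<theta> t A \<longleftrightarrow>
    (\<forall>i<n. \<bar>real (outdeg n A i) - (\<Sum>k\<in>others n i. edge_prob n \<theta> i k)\<bar> \<le> t) \<and>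
    (\<forall>j<n. \<bar>real (indeg n A j) - (\<Sum>k\<in>others n j. edge_prob n \<theta> k j)\<bar> \<le> t)"

lemma degrees_within_prob:
  assumes n: "n \<ge> 2" and t: "0 \<le> t"
  shows "1 - 4 * real n * exp (- 2 * t\<^sup>2 / (real n - 1)) \<le> Prob n \<theta> {A. degrees_within n \<theta> t A}"
proof -
  define Q where "Q = edge_pmf n \<theta>"
  define R where "R i = {f. t \<le> \<bar>real (outdeg n (as_matrix f) i)
      - (\<Sum>k\<in>others n i. edge_prob n \<theta> i k)\<bar>}" for i
  define C where "C j = {f. t \<le> \<bar>real (indeg n (as_matrix f) j)
      - (\<Sum>k\<in>others n j. edge_prob n \<theta> k j)\<bar>}" for j
  define b where "b = 2 * exp (- 2 * t\<^sup>2 / (real n - 1))"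
  define G where "G = {f. degrees_within n \<theta> t (as_matrix f)}"
  have "UNIV - G \<subseteq> (\<Union>i\<in>{..<n}. R i) \<union> (\<Union>j\<in>{..<n}. C j)"
    by (auto simp: G_def degrees_within_def R_def C_def)
  then have "measure_pmf.prob Q (UNIV - G)
      \<le> measure_pmf.prob Q ((\<Union>i\<in>{..<n}. R i) \<union> (\<Union>j\<in>{..<n}. C j))"
    by (intro measure_pmf.finite_measure_mono) auto
  also have "\<dots> \<le> measure_pmf.prob Q (\<Union>i\<in>{..<n}. R i) + measure_pmf.prob Q (\<Union>j\<in>{..<n}. C j)"
    by (rule measure_Un_le) auto
  also have "measure_pmf.prob Q (\<Union>i\<in>{..<n}. R i) \<le> (\<Sum>i<n. measure_pmf.prob Q (R i))"
    by (rule measure_pmf.finite_measure_subadditive_finite) auto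
  also have "\<dots> \<le> (\<Sum>i<n. b)"
    unfolding R_def b_def Q_def by (intro sum_mono outdeg_deviation[OF n _ t]) auto
  also have "measure_pmf.prob Q (\<Union>j\<in>{..<n}. C j) \<le> (\<Sum>j<n. measure_pmf.prob Q (C j))"
    by (rule measure_pmf.finite_measure_subadditive_finite) auto
  also have "\<dots> \<le> (\<Sum>j<n. b)"
    unfolding C_def b_def Q_def by (intro sum_mono indeg_deviation[OF n _ t]) auto
  finally have "measure_pmf.prob Q (UNIV - G) \<le> 4 * real n * exp (- 2 * t\<^sup>2 / (real n - 1))"
    by (simp add: b_def)
  moreover have "measure_pmf.prob Q (UNIV - G) = 1 - measure_pmf.prob Q G"
    using measure_pmf.prob_compl[of G Q] by simp
  ultimately show ?thesis unfolding Prob_as_pmf Q_def G_def by simp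
qed

lemma union_bound_le:
  assumes n: "n \<ge> 2"
  shows "4 * real n * exp (- 2 * (sqrt (real n * ln (real n)))\<^sup>2 / (real n - 1)) \<le> 4 / real n"
proof -
  have n0: "0 < real n" and n1: "0 < real n - 1" and l0: "0 \<le> ln (real n)" using n by simp_all
  have "ln (real n) * (real n - 1) \<le> real n * ln (real n)"
    using l0 by (simp add: algebra_simps)
  then have "ln (real n) \<le> real n * ln (real n) / (real n - 1)"
    using n1 by (simp add: pos_le_divide_eq)
  then have "- 2 * (sqrt (real n * ln (real n)))\<^sup>2 / (real n - 1) \<le> - 2 * ln (real n)"
    using l0 n0 by (simp add: divide_simps)
  then have "exp (- 2 * (sqrt (real n * ln (real n)))\<^sup>2 / (real n - 1)) \<le> exp (- 2 * ln (real n))"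
    by simp
  also have "exp (- 2 * ln (real n)) = exp (- ln (real n)) * exp (- ln (real n))"
    by (simp add: exp_add[symmetric])
  also have "\<dots> = 1 / (real n * real n)" using n0 by (simp add: exp_minus inverse_eq_divide)
  finally have "4 * real n * exp (- 2 * (sqrt (real n * ln (real n)))\<^sup>2 / (real n - 1))
      \<le> 4 * real n * (1 / (real n * real n))"
    using n0 by (intro mult_left_mono) auto
  also have "\<dots> = 4 / real n" using n0 by simp
  finally show ?thesis .
qed

lemma err_bound_le:
  assumes n: "n \<ge> 3" and M: "0 \<le> M" and t: "0 \<le> t"
  shows "err_bound n t M \<le> 240 * exp 4 * exp (4 * M) * t / real n"
proof -
  define u where "u = 4 * exp (2 * M + 2)"
  define a where "a = real n"
  have a3: "3 \<le> a" using n by (simp add: a_def)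
  have "1 \<le> exp (2 * M + 2)" using M by simp
  then have u1: "1 \<le> u" unfolding u_def by linarith
  have w: "slope_lb M = 1 / u" unfolding slope_lb_def u_def exp_minus by (simp add: field_simps)
  have eps: "mp_eps n t (slope_lb M) = t * u / (a - 1)" unfolding mp_eps_def w a_def by simp
  have eps': "mp_eps n t (1 / u) = t * u / (a - 1)" using eps w by simp
  have S: "mp_S n t (slope_lb M) = t * u + t * u * u / 2"
    unfolding mp_S_def w eps' using a3 u1 by (simp add: a_def field_simps)
  have E: "err_bound n t M = 2 * (t * u) / (a - 1) + (2 * (t * u) + t * u * u) / (a - 2)"
  proof -
    have "2 * mp_S n t (slope_lb M) = 2 * (t * u) + t * u * u" unfolding S by (simp add: algebra_simps)
    then show ?thesis unfolding err_bound_def eps a_def[symmetric] by (simp add: add_divide_distrib)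
  qed
  have tu: "t * u \<le> t * u * u" using mult_left_mono[of 1 u "t*u"] t u1 by simp
  have tu0: "0 \<le> t * u" using t u1 by simp
  have third: "x / (a - c) \<le> 3 * x / a" if "0 \<le> x" "c \<le> 2" for x c
  proof -
    have "x / (a - c) \<le> x / (a / 3)" using that a3 by (intro divide_left_mono) auto
    then show ?thesis by (simp add: mult.commute)
  qed
  have "2 * (t * u) / (a - 1) \<le> 2 * (t * u * u) / (a - 1)"
    using tu a3 by (intro divide_right_mono) auto
  also have "\<dots> \<le> 3 * (2 * (t * u * u)) / a" by (rule third) (use tu tu0 in simp_all)
  finally have A1: "2 * (t * u) / (a - 1) \<le> 6 * (t * u * u) / a" by simp
  have "(2 * (t * u) + t * u * u) / (a - 2) \<le> (3 * (t * u * u)) / (a - 2)"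
    using tu a3 by (intro divide_right_mono) auto
  also have "\<dots> \<le> 3 * (3 * (t * u * u)) / a" by (rule third) (use tu tu0 in simp_all)
  finally have A2: "(2 * (t * u) + t * u * u) / (a - 2) \<le> 9 * (t * u * u) / a" by simp
  have "err_bound n t M \<le> 15 * (t * u * u) / a"
    unfolding E using A1 A2 by (simp add: add_divide_distrib[symmetric])
  moreover have "exp (2 * M + 2) * exp (2 * M + 2) = exp 4 * exp (4 * M)"
    by (simp add: exp_add[symmetric])
  then have "u * u = 16 * exp 4 * exp (4 * M)" unfolding u_def by simp
  then have "15 * (t * u * u) / a = 240 * exp 4 * exp (4 * M) * t / real n"
    unfolding a_def by (simp add: mult.assoc)
  ultimately show ?thesis by simp
qed

text \<open>A rate, tending to 0, that dominates \<open>e^(4M) sqrt (log n / n)\<close> whenever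
  \<open>M \<le> \<tau> log n\<close> with \<open>\<tau> < 1/24\<close>.\<close>
definition slow_rate :: "nat \<Rightarrow> real" where
  "slow_rate n = sqrt (ln (real n) / real n powr (2/3))"

lemma slow_rate_tendsto_zero: "slow_rate \<longlonglongrightarrow> 0"
proof -
  have "((\<lambda>x::real. ln x / x powr (2/3)) \<longlongrightarrow> 0) at_top" by real_asymp
  then have "(\<lambda>n. ln (real n) / real n powr (2/3)) \<longlonglongrightarrow> 0"
    using filterlim_compose filterlim_real_sequentially by (fastforce simp: o_def)
  from tendsto_real_sqrt[OF this] show ?thesis by (simp add: slow_rate_def[abs_def])
qed

lemma rate_le_slow_rate:
  assumes n: "n \<ge> 2" and tau: "\<tau> < 1/24" and M: "M \<le> \<tau> * ln (real n)"
  shows "exp (4 * M) * (sqrt (ln (real n)) / sqrt (real n)) \<le> slow_rate n"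
proof -
  have n0: "0 < real n" and l0: "0 \<le> ln (real n)" using n by simp_all
  have "4 * M \<le> 4 * \<tau> * ln (real n)" using M by simp
  also have "\<dots> \<le> (1/6) * ln (real n)" using tau l0 by (intro mult_right_mono) auto
  finally have "exp (4 * M) \<le> exp ((1/6) * ln (real n))" by simp
  also have "\<dots> = real n powr (1/6)" using n0 by (simp add: powr_def)
  also have "\<dots> = sqrt (real n powr (1/3))"
    using n0 by (simp add: powr_half_sqrt[symmetric] powr_powr)
  finally have e: "exp (4 * M) \<le> sqrt (real n powr (1/3))" .
  have split: "real n = real n powr (1/3) * real n powr (2/3)"
    using n0 by (simp add: powr_add[symmetric])
  have "exp (4 * M) * (sqrt (ln (real n)) / sqrt (real n)) = exp (4 * M) * sqrt (ln (real n) / real n)"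
    by (simp add: real_sqrt_divide)
  also have "\<dots> \<le> sqrt (real n powr (1/3)) * sqrt (ln (real n) / real n)"
    using e l0 n0 by (intro mult_right_mono) auto
  also have "\<dots> = sqrt (real n powr (1/3) * (ln (real n) / real n))"
    by (rule real_sqrt_mult[symmetric])
  also have "real n powr (1/3) * (ln (real n) / real n) = ln (real n) / real n powr (2/3)"
    using n0 by (subst (2) split) (simp add: field_simps)
  finally show ?thesis unfolding slow_rate_def .
qed

abbreviation mle_near :: "nat \<Rightarrow> (nat \<Rightarrow> real) \<Rightarrow> real \<Rightarrow> (nat \<Rightarrow> nat \<Rightarrow> bool) set" where
  "mle_near n \<theta> r \<equiv> {A. \<exists>\<theta>h. is_mle n A \<theta>h \<and> supdist n \<theta>h \<theta> \<le> r}"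

lemma Prob_mle_near_mono: "r \<le> s \<Longrightarrow> Prob n \<theta> (mle_near n \<theta> r) \<le> Prob n \<theta> (mle_near n \<theta> s)"
  by (intro Prob_mono) auto

lemma err_bound_rates:
  assumes n: "n \<ge> 3" and M0: "0 \<le> M" and M: "M \<le> \<tau> * ln (real n)" and tau: "\<tau> < 1/24"
  defines "Er \<equiv> err_bound n (sqrt (real n * ln (real n))) M"
  shows "Er \<le> 240 * exp 4 * (sqrt (ln (real n)) * exp (8 * M) / sqrt (real n))"
    and "Er \<le> 240 * exp 4 * slow_rate n"
proof -
  define K :: real where "K = 240 * exp 4"
  define t where "t = sqrt (real n * ln (real n))"
  define r where "r = sqrt (ln (real n)) / sqrt (real n)"
  have t0: "0 \<le> t" and r0: "0 \<le> r" unfolding t_def r_def using n by simp_all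
  have K0: "0 \<le> K" by (simp add: K_def)
  have tr: "t / real n = r"
  proof -
    have "sqrt (real n) \<noteq> 0" using n by simp
    moreover have "t = sqrt (real n) * sqrt (ln (real n))" unfolding t_def by (rule real_sqrt_mult)
    moreover have "real n = sqrt (real n) * sqrt (real n)" by simp
    ultimately show ?thesis unfolding r_def by (metis nonzero_mult_divide_mult_cancel_left)
  qed
  have "240 * exp 4 * exp (4 * M) * t / real n = K * (exp (4 * M) * r)"
    unfolding K_def tr[symmetric] by simp
  then have Er_le: "Er \<le> K * (exp (4 * M) * r)"
    using err_bound_le[OF n M0 t0] unfolding Er_def t_def by simp
  have "exp (4 * M) * r \<le> exp (8 * M) * r" using M0 r0 by (intro mult_right_mono) auto
  then show "Er \<le> 240 * exp 4 * (sqrt (ln (real n)) * exp (8 * M) / sqrt (real n))"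
    using Er_le K0 unfolding r_def K_def
    by (smt (verit) mult_left_mono times_divide_eq_right mult.commute)
  have "exp (4 * M) * r \<le> slow_rate n"
    using rate_le_slow_rate[of n \<tau> M] n tau M unfolding r_def by simp
  then show "Er \<le> 240 * exp 4 * slow_rate n"
    using Er_le K0 unfolding K_def by (meson mult_left_mono order_trans)
qed

text \<open>The degrees are
  concentrated at level \<open>t = sqrt (n log n)\<close>, and then the deterministic existence
  theorem applies.\<close>
lemma mle_near_prob:
  fixes \<theta> :: "nat \<Rightarrow> real"
  assumes n: "n \<ge> 3" and M: "supnorm n \<theta> \<le> \<tau> * ln (real n)" and tau: "\<tau> < 1/24"
    and small: "240 * exp 4 * slow_rate n < 1"
  shows "1 - 4 / real n \<le> Prob n \<theta> (mle_near n \<theta>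
           (240 * exp 4 * (sqrt (ln (real n)) * exp (8 * supnorm n \<theta>) / sqrt (real n))))"
    and "1 - 4 / real n \<le> Prob n \<theta> (mle_near n \<theta> (240 * exp 4 * slow_rate n))"
proof -
  define t where "t = sqrt (real n * ln (real n))"
  define Er where "Er = err_bound n t (supnorm n \<theta>)"
  have t0: "0 \<le> t" unfolding t_def using n by simp
  have M0: "0 \<le> supnorm n \<theta>" using n by (intro supnorm_nonneg) simp
  note rates = err_bound_rates[OF n M0 M tau, folded t_def Er_def]
  have "{A. degrees_within n \<theta> t A} \<subseteq> mle_near n \<theta> Er"
  proof
    fix A assume "A \<in> {A. degrees_within n \<theta> t A}"
    then have "degrees_within n \<theta> t A" by simp
    moreover have "err_bound n t (supnorm n \<theta>) < 1" using rates(2) small unfolding Er_def by simp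
    ultimately show "A \<in> mle_near n \<theta> Er"
      using mle_exists_near_truth[OF n t0] unfolding Er_def degrees_within_def by blast
  qed
  then have "Prob n \<theta> {A. degrees_within n \<theta> t A} \<le> Prob n \<theta> (mle_near n \<theta> Er)"
    by (rule Prob_mono)
  moreover have "1 - 4 / real n \<le> Prob n \<theta> {A. degrees_within n \<theta> t A}"
    using union_bound_le[of n] degrees_within_prob[of n t \<theta>] n t0 by (simp add: t_def)
  ultimately have "1 - 4 / real n \<le> Prob n \<theta> (mle_near n \<theta> Er)" by linarith
  then show "1 - 4 / real n \<le> Prob n \<theta> (mle_near n \<theta>
           (240 * exp 4 * (sqrt (ln (real n)) * exp (8 * supnorm n \<theta>) / sqrt (real n))))"
    and "1 - 4 / real n \<le> Prob n \<theta> (mle_near n \<theta> (240 * exp 4 * slow_rate n))"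
    using Prob_mle_near_mono[OF rates(1), where n = n and \<theta> = \<theta>]
      Prob_mle_near_mono[OF rates(2), where n = n and \<theta> = \<theta>] by linarith+
qed

text \<open>Asymptotic form: for every \<open>\<epsilon>, \<delta> > 0\<close>, eventually both events have probability
  at least \<open>1 - \<epsilon>\<close>, since \<open>4/n \<rightarrow> 0\<close> and \<open>slow_rate n \<rightarrow> 0\<close>.\<close>
lemma eventually_mle_near:
  fixes \<theta>s :: "nat \<Rightarrow> nat \<Rightarrow> real"
  assumes tau: "\<tau> < 1/24" and M: "\<forall>n\<ge>2. supnorm n (\<theta>s n) \<le> \<tau> * ln (real n)"
    and \<epsilon>: "0 < \<epsilon>" and \<delta>: "0 < \<delta>"
  shows "\<forall>\<^sub>F n in sequentially.
    1 - \<epsilon> \<le> Prob n (\<theta>s n) (mle_near n (\<theta>s n)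
       (240 * exp 4 * (sqrt (ln (real n)) * exp (8 * supnorm n (\<theta>s n)) / sqrt (real n)))) \<and>
    1 - \<epsilon> \<le> Prob n (\<theta>s n) (mle_near n (\<theta>s n) \<delta>)"
proof -
  have slow: "(\<lambda>n. 240 * exp 4 * slow_rate n) \<longlonglongrightarrow> 0"
    using tendsto_mult_right_zero[OF slow_rate_tendsto_zero] by simp
  have inv: "(\<lambda>n. 4 / real n) \<longlonglongrightarrow> 0" by real_asymp
  have "0 < min 1 \<delta>" using \<delta> by simp
  with eventually_ge_at_top[of "3::nat"] order_tendstoD(2)[OF slow] order_tendstoD(2)[OF inv \<epsilon>]
  have "\<forall>\<^sub>F n in sequentially. n \<ge> 3 \<and> 240 * exp 4 * slow_rate n < min 1 \<delta> \<and> 4 / real n < \<epsilon>"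
    by (intro eventually_conj) blast+
  then show ?thesis
  proof eventually_elim
    case (elim n)
    then have "240 * exp 4 * slow_rate n < 1" by simp
    note bounds = mle_near_prob[OF _ M[rule_format] tau this] elim
    have "Prob n (\<theta>s n) (mle_near n (\<theta>s n) (240 * exp 4 * slow_rate n))
        \<le> Prob n (\<theta>s n) (mle_near n (\<theta>s n) \<delta>)"
      using elim by (intro Prob_mle_near_mono) simp
    then show ?case using bounds by force
  qed
qed

lemma tendsto_one_if_eventually_ge:
  fixes f :: "nat \<Rightarrow> real"
  assumes "\<forall>n. f n \<le> 1" and "\<forall>\<epsilon>>0. \<forall>\<^sub>F n in sequentially. 1 - \<epsilon> \<le> f n"
  shows "f \<longlonglongrightarrow> 1"
proof (rule order_tendstoI)
  fix a :: real assume "a < 1"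
  then have "0 < (1 - a) / 2" and between: "a < 1 - (1 - a) / 2" by (simp_all add: field_simps)
  from assms(2)[rule_format, OF this(1)] show "\<forall>\<^sub>F n in sequentially. a < f n"
    by eventually_elim (rule less_le_trans[OF between])
next
  fix a :: real assume "1 < a"
  then show "\<forall>\<^sub>F n in sequentially. f n < a"
    using assms(1) by (intro always_eventually) (auto intro: le_less_trans)
qed

theorem theorem1:
  fixes \<tau> :: real and \<theta>s :: "nat \<Rightarrow> nat \<Rightarrow> real"
  assumes "0 < \<tau>" and "\<tau> < 1/24"
    and "\<forall>n\<ge>2. supnorm n (\<theta>s n) \<le> \<tau> * ln (real n)"
  shows "((\<lambda>n. Prob n (\<theta>s n) {A. mle_exists n A}) \<longlonglongrightarrow> 1) \<and>
    (\<forall>\<epsilon>>0. \<exists>C>0. \<forall>\<^sub>F n in sequentially.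
           Prob n (\<theta>s n) {A. \<exists>\<theta>h. is_mle n A \<theta>h \<and>
              supdist n \<theta>h (\<theta>s n)
                \<le> C * (sqrt (ln (real n)) * exp (8 * supnorm n (\<theta>s n)) / sqrt (real n))}
           \<ge> 1 - \<epsilon>) \<and>
    (\<forall>\<epsilon>>0. \<forall>\<delta>>0. \<forall>\<^sub>F n in sequentially.
           Prob n (\<theta>s n) {A. \<exists>\<theta>h. is_mle n A \<theta>h \<and> supdist n \<theta>h (\<theta>s n) \<le> \<delta>}
           \<ge> 1 - \<epsilon>) \<and>
    (\<forall>n\<ge>2. \<forall>A \<theta>1 \<theta>2. is_mle n A \<theta>1 \<and> is_mle n A \<theta>2 \<longrightarrow>
           (\<forall>k<2*n-1. \<theta>1 k = \<theta>2 k))"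
proof (intro conjI allI impI)
  note near = eventually_mle_near[OF assms(2,3)]
  show "(\<lambda>n. Prob n (\<theta>s n) {A. mle_exists n A}) \<longlonglongrightarrow> 1"
  proof (rule tendsto_one_if_eventually_ge)
    have exists: "Prob n (\<theta>s n) (mle_near n (\<theta>s n) 1) \<le> Prob n (\<theta>s n) {A. mle_exists n A}"
      for n by (intro Prob_mono) (auto simp: mle_exists_def)
    show "\<forall>\<epsilon>>0. \<forall>\<^sub>F n in sequentially. 1 - \<epsilon> \<le> Prob n (\<theta>s n) {A. mle_exists n A}"
    proof (intro allI impI)
      fix \<epsilon> :: real assume "0 < \<epsilon>"
      from near[OF this zero_less_one]
      show "\<forall>\<^sub>F n in sequentially. 1 - \<epsilon> \<le> Prob n (\<theta>s n) {A. mle_exists n A}"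
        by eventually_elim (use exists in \<open>meson order_trans\<close>)
    qed
  qed (simp add: Prob_le1)
  show "\<exists>C>0. \<forall>\<^sub>F n in sequentially. Prob n (\<theta>s n) (mle_near n (\<theta>s n)
      (C * (sqrt (ln (real n)) * exp (8 * supnorm n (\<theta>s n)) / sqrt (real n)))) \<ge> 1 - \<epsilon>"
    if "\<epsilon> > 0" for \<epsilon>
    using near[OF that zero_less_one] by (intro exI[of _ "240 * exp 4"]) (auto elim: eventually_mono)
  show "\<forall>\<^sub>F n in sequentially. Prob n (\<theta>s n) (mle_near n (\<theta>s n) \<delta>) \<ge> 1 - \<epsilon>"
    if "\<epsilon> > 0" "\<delta> > 0" for \<epsilon> \<delta>
    using near[OF that] by (auto elim: eventually_mono)
  show "\<theta>1 k = \<theta>2 k" if "n \<ge> 2" "is_mle n A \<theta>1 \<and> is_mle n A \<theta>2" "k < 2*n-1" for n A \<theta>1 \<theta>2 k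
    using mle_unique that by blast
qed

end
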